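(* Let $\mathfrak g$ be a finite-dimensional semisimple Lie algebra and $S\subset\Delta_+$ a nonempty set of positive roots closed under addition within $\Delta_+$. Then $$\widetilde{U(\bar{\mathfrak n}_{S-})}:=\{[\mu]\in\widetilde{U(\bar{\mathfrak n}_S)}:\mu\in F(S),\ \mathrm{Supp}(\mu)\subset M(S)_-\}$$ is isomorphic to $U(\bar{\mathfrak n}_{S-})$.
   Context: $\mathfrak g$ has Cartan subalgebra $\mathfrak h$, roots $\Delta$, positive roots $\Delta_+$; root vectors $x_\alpha$ satisfy $[x_\alpha,x_\beta]=C_{\alpha,\beta}x_{\alpha+\beta}$ ($C_{\alpha,\beta}=0$ if $\alpha+\beta$ is not a root). $S\subset\Delta_+$ nonempty with $\alpha,\beta\in S,\ \alpha+\beta\in\Delta_+\Rightarrow\alpha+\beta\in S$; $\mathfrak n_S=\bigoplus_{\alpha\in S}\mathbb Cx_\alpha$, $\bar{\mathfrak n}_S=\mathfrak n_S\otimes\mathbb C[t,t^{-1}]$ (subalgebra of the untwisted affine algebra $\widehat{\mathfrak g}$), $\bar{\mathfrak n}_{S-}=\mathfrak n_S\otimes t^{-1}\mathbb C[t^{-1}]$, $\bar{\mathfrak n}_{S+}=\mathfrak n_S\otimes\mathbb C[t]$. $M(S)$ is the free monoid on $\mathbb Z\times S$ (words $((m_1,\beta_1),\dots,(m_p,\beta_p))$, concatenation $\circ$); $a\le j$ means $m_l+\cdots+m_p\le j$ for all $l$. For $\mu:M(S)\to\mathbb C$, $\mathrm{Supp}(\mu)=\{a:\mu(a)\ne0\}$,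 $\mathrm{Supp}_j(\mu)=\{a\in\mathrm{Supp}(\mu):a\le j\}$. $F(S)$ is the algebra of $\mu$ with every $\mathrm{Supp}_j(\mu)$ finite, product $(\mu_1\mu_2)(a)=\sum_{a=b\circ c}\mu_1(b)\mu_2(c)$; $X_\beta(m)$ is the indicator of a one-letter word. $\widetilde I_S$ is the two-sided ideal of $F(S)$ generated by $X_\alpha(m)X_\beta(l)-X_\beta(l)X_\alpha(m)-C_{\alpha,\beta}X_{\alpha+\beta}(m+l)$ ($\alpha,\beta\in S$), $\widetilde{U(\bar{\mathfrak n}_S)}=F(S)/\widetilde I_S$, $[\mu]$ the class of $\mu$. $M(S)_-$ is the set of words with all $m_l\le-1$ (including the empty word). *)

theory Defs
  imports Complex_Main "HOL-Algebra.QuotRing"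
begin

definition lie_algebra :: "(complex \<Rightarrow> 'g::ab_group_add \<Rightarrow> 'g) \<Rightarrow> ('g \<Rightarrow> 'g \<Rightarrow> 'g) \<Rightarrow> bool" where
  "lie_algebra sc br \<longleftrightarrow> vector_space sc
     \<and> (\<forall>x y z a b. br (sc a x + sc b y) z = sc a (br x z) + sc b (br y z))
     \<and> (\<forall>x y z a b. br z (sc a x + sc b y) = sc a (br z x) + sc b (br z y))
     \<and> (\<forall>x. br x x = 0)
     \<and> (\<forall>x y z. br x (br y z) + br y (br z x) + br z (br x y) = 0)"

definition fin_dim :: "(complex \<Rightarrow> 'g::ab_group_add \<Rightarrow> 'g) \<Rightarrow> bool" where
  "fin_dim sc \<longleftrightarrow> (\<exists>B. finite B \<and> module.span sc B = UNIV)"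

definition lie_subalgebra :: "(complex \<Rightarrow> 'g::ab_group_add \<Rightarrow> 'g) \<Rightarrow> ('g \<Rightarrow> 'g \<Rightarrow> 'g) \<Rightarrow> 'g set \<Rightarrow> bool" where
  "lie_subalgebra sc br H \<longleftrightarrow> module.subspace sc H \<and> (\<forall>x\<in>H. \<forall>y\<in>H. br x y \<in> H)"

definition lie_ideal :: "(complex \<Rightarrow> 'g::ab_group_add \<Rightarrow> 'g) \<Rightarrow> ('g \<Rightarrow> 'g \<Rightarrow> 'g) \<Rightarrow> 'g set \<Rightarrow> bool" where
  "lie_ideal sc br I \<longleftrightarrow> module.subspace sc I \<and> (\<forall>x. \<forall>y\<in>I. br x y \<in> I)"

definition brspan :: "(complex \<Rightarrow> 'g::ab_group_add \<Rightarrow> 'g) \<Rightarrow> ('g \<Rightarrow> 'g \<Rightarrow> 'g) \<Rightarrow> 'g set \<Rightarrow> 'g set \<Rightarrow> 'g set" where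
  "brspan sc br A B = module.span sc {br x y | x y. x \<in> A \<and> y \<in> B}"

fun derived_series :: "(complex \<Rightarrow> 'g::ab_group_add \<Rightarrow> 'g) \<Rightarrow> ('g \<Rightarrow> 'g \<Rightarrow> 'g) \<Rightarrow> nat \<Rightarrow> 'g set \<Rightarrow> 'g set" where
  "derived_series sc br 0 I = I"
| "derived_series sc br (Suc k) I = brspan sc br (derived_series sc br k I) (derived_series sc br k I)"

fun lower_central :: "(complex \<Rightarrow> 'g::ab_group_add \<Rightarrow> 'g) \<Rightarrow> ('g \<Rightarrow> 'g \<Rightarrow> 'g) \<Rightarrow> nat \<Rightarrow> 'g set \<Rightarrow> 'g set" where
  "lower_central sc br 0 H = H"
| "lower_central sc br (Suc k) H = brspan sc br H (lower_central sc br k H)"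

definition solvable_lie :: "(complex \<Rightarrow> 'g::ab_group_add \<Rightarrow> 'g) \<Rightarrow> ('g \<Rightarrow> 'g \<Rightarrow> 'g) \<Rightarrow> 'g set \<Rightarrow> bool" where
  "solvable_lie sc br I \<longleftrightarrow> (\<exists>k. derived_series sc br k I = {0})"

definition nilpotent_lie :: "(complex \<Rightarrow> 'g::ab_group_add \<Rightarrow> 'g) \<Rightarrow> ('g \<Rightarrow> 'g \<Rightarrow> 'g) \<Rightarrow> 'g set \<Rightarrow> bool" where
  "nilpotent_lie sc br H \<longleftrightarrow> (\<exists>k. lower_central sc br k H = {0})"

definition semisimple_lie :: "(complex \<Rightarrow> 'g::ab_group_add \<Rightarrow> 'g) \<Rightarrow> ('g \<Rightarrow> 'g \<Rightarrow> 'g) \<Rightarrow> bool" where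
  "semisimple_lie sc br \<longleftrightarrow> lie_algebra sc br \<and> fin_dim sc
     \<and> (\<forall>I. lie_ideal sc br I \<and> solvable_lie sc br I \<longrightarrow> I = {0})"

definition normalizer :: "('g \<Rightarrow> 'g \<Rightarrow> 'g) \<Rightarrow> 'g set \<Rightarrow> 'g set" where
  "normalizer br H = {x. \<forall>h\<in>H. br x h \<in> H}"

definition cartan_subalgebra :: "(complex \<Rightarrow> 'g::ab_group_add \<Rightarrow> 'g) \<Rightarrow> ('g \<Rightarrow> 'g \<Rightarrow> 'g) \<Rightarrow> 'g set \<Rightarrow> bool" where
  "cartan_subalgebra sc br H \<longleftrightarrow> lie_subalgebra sc br H \<and> nilpotent_lie sc br H \<and> normalizer br H = H"

text \<open>Linear functionals on H are represented as functions 'g => complex that vanish outside H.\<close>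
definition root_space :: "(complex \<Rightarrow> 'g \<Rightarrow> 'g) \<Rightarrow> ('g \<Rightarrow> 'g \<Rightarrow> 'g) \<Rightarrow> 'g set \<Rightarrow> ('g \<Rightarrow> complex) \<Rightarrow> 'g set" where
  "root_space sc br H \<alpha> = {x. \<forall>h\<in>H. br h x = sc (\<alpha> h) x}"

definition roots :: "(complex \<Rightarrow> 'g::ab_group_add \<Rightarrow> 'g) \<Rightarrow> ('g \<Rightarrow> 'g \<Rightarrow> 'g) \<Rightarrow> 'g set \<Rightarrow> ('g \<Rightarrow> complex) set" where
  "roots sc br H = {\<alpha>. (\<forall>h\<in>H. \<forall>k\<in>H. \<forall>a b. \<alpha> (sc a h + sc b k) = a * \<alpha> h + b * \<alpha> k)
                      \<and> (\<forall>x. x \<notin> H \<longrightarrow> \<alpha> x = 0)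
                      \<and> (\<exists>h\<in>H. \<alpha> h \<noteq> 0)
                      \<and> root_space sc br H \<alpha> \<noteq> {0}}"

definition radd :: "('g \<Rightarrow> complex) \<Rightarrow> ('g \<Rightarrow> complex) \<Rightarrow> 'g \<Rightarrow> complex" where
  "radd \<alpha> \<beta> = (\<lambda>x. \<alpha> x + \<beta> x)"

definition is_base :: "(complex \<Rightarrow> 'g::ab_group_add \<Rightarrow> 'g) \<Rightarrow> ('g \<Rightarrow> 'g \<Rightarrow> 'g) \<Rightarrow> 'g set \<Rightarrow> ('g \<Rightarrow> complex) set \<Rightarrow> bool" where
  "is_base sc br H Bs \<longleftrightarrow> finite Bs \<and> Bs \<subseteq> roots sc br H
     \<and> (\<forall>c. (\<forall>x. (\<Sum>\<pi>\<in>Bs. c \<pi> * \<pi> x) = 0) \<longrightarrow> (\<forall>\<pi>\<in>Bs. c \<pi> = (0::complex)))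
     \<and> (\<forall>\<alpha>\<in>roots sc br H. \<exists>k::('g \<Rightarrow> complex) \<Rightarrow> int.
           ((\<forall>\<pi>\<in>Bs. k \<pi> \<ge> 0) \<or> (\<forall>\<pi>\<in>Bs. k \<pi> \<le> 0))
           \<and> \<alpha> = (\<lambda>x. \<Sum>\<pi>\<in>Bs. of_int (k \<pi>) * \<pi> x))"

definition pos_roots :: "(complex \<Rightarrow> 'g::ab_group_add \<Rightarrow> 'g) \<Rightarrow> ('g \<Rightarrow> 'g \<Rightarrow> 'g) \<Rightarrow> 'g set \<Rightarrow> ('g \<Rightarrow> complex) set \<Rightarrow> ('g \<Rightarrow> complex) set" where
  "pos_roots sc br H Bs = {\<alpha>\<in>roots sc br H. \<exists>k::('g \<Rightarrow> complex) \<Rightarrow> nat.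
           \<alpha> = (\<lambda>x. \<Sum>\<pi>\<in>Bs. of_nat (k \<pi>) * \<pi> x)}"

definition conv :: "('l list \<Rightarrow> complex) \<Rightarrow> ('l list \<Rightarrow> complex) \<Rightarrow> 'l list \<Rightarrow> complex" where
  "conv f g a = (\<Sum>k\<le>length a. f (take k a) * g (drop k a))"

definition word_ring :: "('l list \<Rightarrow> complex) set \<Rightarrow> ('l list \<Rightarrow> complex) ring" where
  "word_ring A = \<lparr>carrier = A, mult = conv, one = (\<lambda>a. if a = [] then 1 else 0),
                   zero = (\<lambda>a. 0), add = (\<lambda>f g a. f a + g a)\<rparr>"

definition word_le :: "(int \<times> 'r) list \<Rightarrow> int \<Rightarrow> bool" where
  "word_le a j \<longleftrightarrow> (\<forall>l<length a. sum_list (map fst (drop l a)) \<le> j)"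

definition Supp :: "('l list \<Rightarrow> complex) \<Rightarrow> 'l list set" where
  "Supp \<mu> = {a. \<mu> a \<noteq> 0}"

definition F_carrier :: "'r set \<Rightarrow> ((int \<times> 'r) list \<Rightarrow> complex) set" where
  "F_carrier S = {\<mu>. Supp \<mu> \<subseteq> lists (UNIV \<times> S) \<and> (\<forall>j. finite {a \<in> Supp \<mu>. word_le a j})}"

definition F_ring :: "'r set \<Rightarrow> ((int \<times> 'r) list \<Rightarrow> complex) ring" where
  "F_ring S = word_ring (F_carrier S)"

definition Xw :: "'r \<Rightarrow> int \<Rightarrow> (int \<times> 'r) list \<Rightarrow> complex" where
  "Xw \<beta> m = (\<lambda>a. if a = [(m, \<beta>)] then 1 else 0)"

definition constw :: "complex \<Rightarrow> 'l list \<Rightarrow> complex" where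
  "constw c = (\<lambda>a. if a = [] then c else 0)"

definition rel :: "(('g \<Rightarrow> complex) \<Rightarrow> ('g \<Rightarrow> complex) \<Rightarrow> complex) \<Rightarrow> ('g \<Rightarrow> complex) \<Rightarrow> ('g \<Rightarrow> complex)
                   \<Rightarrow> int \<Rightarrow> int \<Rightarrow> (int \<times> ('g \<Rightarrow> complex)) list \<Rightarrow> complex" where
  "rel C \<alpha> \<beta> m l = (\<lambda>a. conv (Xw \<alpha> m) (Xw \<beta> l) a - conv (Xw \<beta> l) (Xw \<alpha> m) a
                          - C \<alpha> \<beta> * Xw (radd \<alpha> \<beta>) (m + l) a)"

definition I_tilde :: "('g \<Rightarrow> complex) set \<Rightarrow> (('g \<Rightarrow> complex) \<Rightarrow> ('g \<Rightarrow> complex) \<Rightarrow> complex)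
                       \<Rightarrow> ((int \<times> ('g \<Rightarrow> complex)) list \<Rightarrow> complex) set" where
  "I_tilde S C = genideal (F_ring S) {rel C \<alpha> \<beta> m l | \<alpha> \<beta> m l. \<alpha> \<in> S \<and> \<beta> \<in> S}"

definition U_tilde where
  "U_tilde S C = F_ring S Quot I_tilde S C"

definition M_minus :: "'r set \<Rightarrow> (int \<times> 'r) list set" where
  "M_minus S = lists ({m. m \<le> -1} \<times> S)"

definition U_tilde_minus where
  "U_tilde_minus S C = (U_tilde S C)\<lparr>carrier :=
       {I_tilde S C +>\<^bsub>F_ring S\<^esub> \<mu> | \<mu>. \<mu> \<in> F_carrier S \<and> Supp \<mu> \<subseteq> M_minus S}\<rparr>"

text \<open>U(n_{S-}): universal enveloping algebra of n_S \<otimes> t^{-1}C[t^{-1}], presented as the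
  tensor (= free associative) algebra on the basis x_\<beta> \<otimes> t^m (m \<le> -1, \<beta> \<in> S), i.e. finitely
  supported functions on words in these letters, modulo the ideal generated by
  x \<otimes> y - y \<otimes> x - [x,y] for basis elements x, y.\<close>
definition T_minus_carrier :: "'r set \<Rightarrow> ((int \<times> 'r) list \<Rightarrow> complex) set" where
  "T_minus_carrier S = {\<mu>. finite (Supp \<mu>) \<and> Supp \<mu> \<subseteq> M_minus S}"

definition J_minus where
  "J_minus S C = genideal (word_ring (T_minus_carrier S))
      {rel C \<alpha> \<beta> m l | \<alpha> \<beta> m l. \<alpha> \<in> S \<and> \<beta> \<in> S \<and> m \<le> -1 \<and> l \<le> -1}"

definition U_minus where
  "U_minus S C = word_ring (T_minus_carrier S) Quot J_minus S C"

end

theory Submission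
  imports Defs
begin

text \<open>
  Sending a function on negative words to its class modulo \<open>I~_S\<close> is a ring homomorphism from
  the free algebra \<open>T\<close> onto \<open>U~(n_S-)\<close>: a locally finite function supported on negative words
  has finite support. Its kernel \<open>T \<inter> I~_S\<close> contains \<open>J\<close>, the generators of \<open>J\<close> being
  among those of \<open>I~_S\<close>.

  For the reverse inclusion \<open>U(n_S-) = T/J\<close> is made a module over the whole loop algebra:
  \<open>x_\<beta> \<otimes> t^m\<close> acts by left multiplication if \<open>m < 0\<close>, and if \<open>m \<ge> 0\<close> it is commuted
  through the word using the structure constants and kills the empty word. By antisymmetry and
  the Jacobi identity these operators preserve \<open>J\<close> and satisfy the defining relations modulo
  \<open>J\<close>. A letter shifts the total degree of a word by \<open>m\<close>, so a word acts as zero on \<open>f\<close>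
  unless its suffix degrees are bounded in terms of \<open>f\<close>; hence every locally finite
  \<open>\<mu> \<in> F(S)\<close> acts on \<open>T\<close>, multiplicatively, and elements of \<open>I~_S\<close> act into \<open>J\<close>. Acting on the
  empty word, every \<open>\<mu> \<in> T \<inter> I~_S\<close> lies in \<open>J\<close>.
\<close>

section \<open>The convolution algebra of functions on words\<close>

definition delta :: "'a list \<Rightarrow> 'a list \<Rightarrow> complex" where
  "delta w = (\<lambda>a. if a = w then 1 else 0)"

definition letter_mult :: "'a \<Rightarrow> ('a list \<Rightarrow> complex) \<Rightarrow> 'a list \<Rightarrow> complex" where
  "letter_mult y f = (\<lambda>a. case a of [] \<Rightarrow> 0 | z # a' \<Rightarrow> if z = y then f a' else 0)"

lemma conv_assoc: "conv (conv f g) h = conv f (conv g h)"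
proof (rule ext)
  fix a :: "'a list"
  let ?n = "length a"
  let ?G = "\<lambda>i j. f (take i a) * g (take j (drop i a)) * h (drop (i+j) a)"
  have "conv (conv f g) h a = (\<Sum>k\<le>?n. \<Sum>i\<le>k. ?G i (k - i))"
    unfolding conv_def
    by (auto simp: sum_distrib_right min_def take_drop intro!: sum.cong)
  also have "\<dots> = (\<Sum>(i,j)\<in>{(i,j). i+j \<le> ?n}. ?G i j)"
    by (rule sum.triangle_reindex_eq[symmetric])
  also have "{(i,j). i+j \<le> ?n} = Sigma {..?n} (\<lambda>i. {..?n - i})" by auto
  also have "(\<Sum>(i,j)\<in>Sigma {..?n} (\<lambda>i. {..?n - i}). ?G i j) = (\<Sum>i\<le>?n. \<Sum>j\<le>?n-i. ?G i j)"
    by (rule sum.Sigma[symmetric]) auto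
  also have "\<dots> = conv f (conv g h) a"
    unfolding conv_def
    by (auto simp: sum_distrib_left mult.assoc add.commute intro!: sum.cong)
  finally show "conv (conv f g) h a = conv f (conv g h) a" .
qed

lemma conv_delta_Nil_left: "conv (delta []) f = f"
  by (rule ext) (simp add: conv_def delta_def atMost_atLeast0 sum.atLeast_Suc_atMost)

lemma conv_delta_Nil_right: "conv f (delta []) = f"
  by (rule ext) (simp add: conv_def delta_def if_distrib[of "(*) _"] sum.delta' cong: if_cong)

lemma conv_add_left: "conv (\<lambda>a. f a + g a) h = (\<lambda>a. conv f h a + conv g h a)"
  by (auto simp: conv_def distrib_right sum.distrib)

lemma conv_add_right: "conv h (\<lambda>a. f a + g a) = (\<lambda>a. conv h f a + conv h g a)"
  by (auto simp: conv_def distrib_left sum.distrib)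

lemma conv_scal_left: "conv (\<lambda>a. c * f a) h = (\<lambda>a. c * conv f h a)"
  by (auto simp: conv_def sum_distrib_left mult.assoc)

lemma conv_diff_left: "conv (\<lambda>a. f a - g a) h = (\<lambda>a. conv f h a - conv g h a)"
  by (auto simp: conv_def left_diff_distrib sum_subtractf)

lemma conv_zero_left: "conv (\<lambda>a. 0) h = (\<lambda>a. 0)"
  by (auto simp: conv_def)

lemma conv_delta_single: "conv (delta [y]) f = letter_mult y f"
proof (rule ext)
  fix a
  show "conv (delta [y]) f a = letter_mult y f a"
  proof (cases a)
    case Nil then show ?thesis by (simp add: conv_def delta_def letter_mult_def)
  next
    case (Cons x xs)
    have "conv (delta [y]) f a = delta [y] (take 0 a) * f (drop 0 a) + (\<Sum>k<length a. delta [y] (take (Suc k) a) * f (drop (Suc k) a))"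
      unfolding conv_def by (rule sum.atMost_shift)
    also have "(\<Sum>k<length a. delta [y] (take (Suc k) a) * f (drop (Suc k) a)) = (\<Sum>k\<in>{0}. delta [y] (take (Suc k) a) * f (drop (Suc k) a))"
      using Cons by (intro sum.mono_neutral_right) (auto simp: delta_def)
    finally show ?thesis using Cons by (simp add: delta_def letter_mult_def)
  qed
qed

lemma conv_constw: fixes f :: "'a list \<Rightarrow> complex" shows "conv (constw c) f = (\<lambda>a. c * f a)"
proof -
  have "(constw c :: 'a list \<Rightarrow> complex) = (\<lambda>a. c * delta [] a)" by (auto simp: constw_def delta_def)
  then show ?thesis by (simp only: conv_scal_left[of c "delta []" f] conv_delta_Nil_left)
qed

lemma conv_delta_delta: "conv (delta b) (delta c) = delta (b @ c)"
proof (induction b)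
  case Nil then show ?case by (simp add: conv_delta_Nil_left)
next
  case (Cons y b)
  have e: "delta (y # b) = conv (delta [y]) (delta b)"
    by (simp add: conv_delta_single) (auto simp: letter_mult_def delta_def split: list.splits)
  have "conv (delta (y # b)) (delta c) = conv (delta [y]) (delta (b @ c))"
    by (simp add: e conv_assoc Cons)
  also have "\<dots> = delta ((y # b) @ c)"
    by (simp add: conv_delta_single) (auto simp: letter_mult_def delta_def split: list.splits)
  finally show ?case .
qed

lemma Xw_eq_delta: "Xw \<beta> m = delta [(m,\<beta>)]"
  by (simp add: Xw_def delta_def)

lemma conv_sum_left: "finite I \<Longrightarrow> conv (\<lambda>x. \<Sum>i\<in>I. c i * g i x) f = (\<lambda>x. \<Sum>i\<in>I. c i * conv (g i) f x)"
proof (induction I rule: finite_induct)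
  case empty then show ?case by (simp add: conv_zero_left)
next
  case (insert i I)
  have "conv (\<lambda>x. \<Sum>i\<in>insert i I. c i * g i x) f = conv (\<lambda>x. c i * g i x + (\<Sum>i\<in>I. c i * g i x)) f"
    using insert by simp
  also have "\<dots> = (\<lambda>x. c i * conv (g i) f x + conv (\<lambda>x. \<Sum>i\<in>I. c i * g i x) f x)"
    by (simp add: conv_add_left conv_scal_left)
  finally show ?case using insert by simp
qed

lemma Supp_conv: "a \<in> Supp (conv f g) \<Longrightarrow> \<exists>b c. a = b @ c \<and> b \<in> Supp f \<and> c \<in> Supp g"
proof -
  assume "a \<in> Supp (conv f g)"
  then have "(\<Sum>k\<le>length a. f (take k a) * g (drop k a)) \<noteq> 0" by (simp add: Supp_def conv_def)
  from sum.not_neutral_contains_not_neutral[OF this] obtain k where "f (take k a) * g (drop k a) \<noteq> 0" by blast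
  then show ?thesis by (intro exI[of _ "take k a"] exI[of _ "drop k a"]) (simp add: Supp_def)
qed

lemma Supp_conv_subset: "Supp (conv f g) \<subseteq> (\<lambda>(b,c). b @ c) ` (Supp f \<times> Supp g)"
  using Supp_conv by fastforce

lemma inj_on_take_drop: "inj_on (\<lambda>(a, k). (take k a, drop k a)) (Sigma W (\<lambda>a. {..length a}))"
proof (rule inj_onI, clarsimp)
  fix a k a' k'
  assume "k \<le> length a" "k' \<le> length a'" "take k a = take k' a'" "drop k a = drop k' a'"
  moreover from this have "a = a'" by (metis append_take_drop_id)
  ultimately show "a = a' \<and> k = k'" by (metis length_take min.absorb2)
qed

lemma sum_conv_mult:
  assumes W: "finite W" and B: "finite B" and D: "finite D"
    and closed: "\<And>b c. b \<in> B \<Longrightarrow> c \<in> D \<Longrightarrow> b @ c \<in> W"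
    and supp: "\<And>b c. f b * g c * H (b @ c) \<noteq> 0 \<Longrightarrow> b \<in> B \<and> c \<in> D"
  shows "(\<Sum>a\<in>W. conv f g a * H a) = (\<Sum>b\<in>B. \<Sum>c\<in>D. f b * g c * H (b @ c))"
proof -
  let ?h = "\<lambda>(a, k). (take k a, drop k a)"
  let ?G = "\<lambda>(b, c). f b * g c * H (b @ c)"
  let ?P = "Sigma W (\<lambda>a. {..length a})"
  have "(\<Sum>a\<in>W. conv f g a * H a) = (\<Sum>a\<in>W. \<Sum>k\<le>length a. ?G (take k a, drop k a))"
    by (simp add: conv_def sum_distrib_right)
  also have "\<dots> = (\<Sum>p\<in>?P. ?G (?h p))"
    by (subst sum.Sigma) (auto simp: W split_def)
  also have "\<dots> = (\<Sum>q\<in>?h ` ?P. ?G q)"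
    by (rule sum.reindex[symmetric, unfolded comp_def]) (rule inj_on_take_drop)
  also have "\<dots> = (\<Sum>q\<in>B \<times> D. ?G q)"
  proof (rule sum.mono_neutral_right)
    show "finite (?h ` ?P)" using W by simp
    show "B \<times> D \<subseteq> ?h ` ?P"
    proof clarify
      fix b c assume "b \<in> B" "c \<in> D"
      then have "(b @ c, length b) \<in> ?P" using closed by auto
      then show "(b, c) \<in> ?h ` ?P" by (rule rev_image_eqI) simp
    qed
    show "\<forall>q\<in>?h ` ?P - B \<times> D. ?G q = 0" using supp by fastforce
  qed
  also have "\<dots> = (\<Sum>b\<in>B. \<Sum>c\<in>D. f b * g c * H (b @ c))"
    by (simp add: sum.cartesian_product)
  finally show ?thesis .
qed

lemma Supp_add: "Supp (\<lambda>a. f a + g a) \<subseteq> Supp f \<union> Supp g"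
  by (auto simp: Supp_def)

lemma Supp_neg[simp]: "Supp (\<lambda>a. - f a) = Supp f"
  by (auto simp: Supp_def)

lemma Supp_scal: "Supp (\<lambda>a. c * f a) \<subseteq> Supp f"
  by (auto simp: Supp_def)

lemma Supp_zero[simp]: "Supp (\<lambda>a. 0) = {}"
  by (auto simp: Supp_def)

lemma Supp_delta[simp]: "Supp (delta w) = {w}"
  by (auto simp: Supp_def delta_def)

lemma Supp_letter_mult_iff: "a \<in> Supp (letter_mult y g) \<longleftrightarrow> (\<exists>a'. a = y # a' \<and> a' \<in> Supp g)"
  by (cases a) (auto simp: Supp_def letter_mult_def)

lemma Supp_letter_mult: "Supp (letter_mult y g) = Cons y ` Supp g"
  by (auto simp: Supp_letter_mult_iff)

lemma finite_Supp_letter_mult: "finite (Supp g) \<Longrightarrow> finite (Supp (letter_mult y g))"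
  by (simp add: Supp_letter_mult)

lemma letter_mult_Cons[simp]: "letter_mult y g (y # a) = g a"
  by (simp add: letter_mult_def)

lemma letter_mult_zero[simp]: "letter_mult y (\<lambda>a. 0) = (\<lambda>a. 0)"
  by (rule ext) (auto simp: letter_mult_def split: list.splits)

lemma letter_mult_delta: "letter_mult y (delta w) = delta (y # w)"
  by (rule ext) (auto simp: letter_mult_def delta_def split: list.splits)

lemma Supp_sum_sub: "Supp (\<lambda>a. \<Sum>i\<in>I. c i * h i a) \<subseteq> (\<Union>i\<in>I. Supp (h i))"
proof
  fix a assume "a \<in> Supp (\<lambda>a. \<Sum>i\<in>I. c i * h i a)"
  then have "(\<Sum>i\<in>I. c i * h i a) \<noteq> 0" by (simp add: Supp_def)
  from sum.not_neutral_contains_not_neutral[OF this] obtain i where "i \<in> I" "c i * h i a \<noteq> 0" by blast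
  then show "a \<in> (\<Union>i\<in>I. Supp (h i))" by (auto simp: Supp_def)
qed

lemma finite_Supp_sum:
  "finite I \<Longrightarrow> (\<And>i. i \<in> I \<Longrightarrow> finite (Supp (h i))) \<Longrightarrow> finite (Supp (\<lambda>a. \<Sum>i\<in>I. c i * h i a))"
  by (rule finite_subset[OF Supp_sum_sub]) auto

definition lin_ext :: "('a list \<Rightarrow> 'a list \<Rightarrow> complex) \<Rightarrow> ('a list \<Rightarrow> complex) \<Rightarrow> 'a list \<Rightarrow> complex" where
  "lin_ext G f = (\<lambda>a. \<Sum>w\<in>Supp f. f w * G w a)"

lemma lin_ext_eq: assumes "finite W" "Supp f \<subseteq> W" shows "lin_ext G f = (\<lambda>a. \<Sum>w\<in>W. f w * G w a)"
  unfolding lin_ext_def by (rule ext, rule sum.mono_neutral_left) (use assms in \<open>auto simp: Supp_def\<close>)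

lemma lin_ext_add:
  assumes "finite (Supp f)" "finite (Supp g)"
  shows "lin_ext G (\<lambda>a. f a + g a) = (\<lambda>a. lin_ext G f a + lin_ext G g a)"
proof -
  let ?W = "Supp f \<union> Supp g"
  have fW: "finite ?W" using assms by simp
  have "lin_ext G (\<lambda>a. f a + g a) = (\<lambda>a. \<Sum>w\<in>?W. (f w + g w) * G w a)"
    by (rule lin_ext_eq[OF fW]) (use Supp_add in auto)
  moreover have "lin_ext G f = (\<lambda>a. \<Sum>w\<in>?W. f w * G w a)" by (rule lin_ext_eq[OF fW]) auto
  moreover have "lin_ext G g = (\<lambda>a. \<Sum>w\<in>?W. g w * G w a)" by (rule lin_ext_eq[OF fW]) auto
  ultimately show ?thesis by (simp add: distrib_right sum.distrib)
qed

lemma lin_ext_scal: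
  assumes "finite (Supp f)"
  shows "lin_ext G (\<lambda>a. c * f a) = (\<lambda>a. c * lin_ext G f a)"
proof -
  have "lin_ext G (\<lambda>a. c * f a) = (\<lambda>a. \<Sum>w\<in>Supp f. (c * f w) * G w a)"
    by (rule lin_ext_eq[OF assms]) (auto simp: Supp_def)
  then show ?thesis by (simp add: lin_ext_def sum_distrib_left mult.assoc)
qed

lemma lin_ext_zero[simp]: "lin_ext G (\<lambda>a. 0) = (\<lambda>a. 0)"
  by (simp add: lin_ext_def)

lemma lin_ext_delta: "lin_ext G (delta w) = G w"
  unfolding lin_ext_def Supp_delta by (simp add: delta_def)

lemma lin_ext_family_add: "lin_ext (\<lambda>w a. G1 w a + c * G2 w a) f = (\<lambda>a. lin_ext G1 f a + c * lin_ext G2 f a)"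
  by (simp add: lin_ext_def distrib_left sum.distrib sum_distrib_left mult.left_commute)

lemma lin_ext_letter_mult:
  shows "lin_ext G (letter_mult y g) = lin_ext (\<lambda>w. G (y # w)) g"
proof (rule ext)
  fix a
  have "lin_ext G (letter_mult y g) a = (\<Sum>w\<in>Cons y ` Supp g. letter_mult y g w * G w a)"
    by (simp add: lin_ext_def Supp_letter_mult)
  also have "\<dots> = (\<Sum>v\<in>Supp g. letter_mult y g (y # v) * G (y # v) a)"
    by (rule sum.reindex[unfolded comp_def]) (auto simp: inj_on_def)
  finally show "lin_ext G (letter_mult y g) a = lin_ext (\<lambda>w. G (y # w)) g a" by (simp add: lin_ext_def)
qed

lemma letter_mult_lin_ext: "letter_mult y (lin_ext G g) = lin_ext (\<lambda>w. letter_mult y (G w)) g"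
  by (rule ext) (auto simp: letter_mult_def lin_ext_def split: list.splits)

lemma lin_ext_delta_self: "finite (Supp f) \<Longrightarrow> lin_ext delta f = f"
proof (rule ext)
  fix a assume "finite (Supp f)"
  have "lin_ext delta f a = (\<Sum>w\<in>Supp f. if w = a then f w else 0)"
    by (auto simp: lin_ext_def delta_def intro!: sum.cong)
  also have "\<dots> = (if a \<in> Supp f then f a else 0)" using \<open>finite (Supp f)\<close> by (rule sum.delta)
  also have "\<dots> = f a" by (simp add: Supp_def)
  finally show "lin_ext delta f a = f a" .
qed

lemma expand_delta: "finite (Supp f) \<Longrightarrow> f = (\<lambda>x. \<Sum>w\<in>Supp f. f w * delta w x)"
  using lin_ext_delta_self[of f] by (simp add: lin_ext_def)

lemma lin_ext_sum:
  assumes "finite I" "\<And>i. i \<in> I \<Longrightarrow> finite (Supp (h i))"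
  shows "lin_ext G (\<lambda>a. \<Sum>i\<in>I. c i * h i a) = (\<lambda>a. \<Sum>i\<in>I. c i * lin_ext G (h i) a)"
  using assms
proof (induction I rule: finite_induct)
  case empty then show ?case by simp
next
  case (insert i I)
  have "finite (Supp (h i))" using insert.prems by blast
  then have f1: "finite (Supp (\<lambda>a. c i * h i a))" by (rule finite_subset[OF Supp_scal])
  have f2: "finite (Supp (\<lambda>a. \<Sum>i\<in>I. c i * h i a))" using insert by (intro finite_Supp_sum) auto
  have "lin_ext G (\<lambda>a. \<Sum>i\<in>insert i I. c i * h i a) = lin_ext G (\<lambda>a. c i * h i a + (\<Sum>i\<in>I. c i * h i a))"
    using insert by simp
  also have "\<dots> = (\<lambda>a. lin_ext G (\<lambda>a. c i * h i a) a + lin_ext G (\<lambda>a. \<Sum>i\<in>I. c i * h i a) a)"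
    by (rule lin_ext_add[OF f1 f2])
  also have "\<dots> = (\<lambda>a. c i * lin_ext G (h i) a + (\<Sum>i\<in>I. c i * lin_ext G (h i) a))"
    using insert by (simp add: lin_ext_scal)
  finally show ?case using insert by simp
qed

lemma Supp_lin_ext: "a \<in> Supp (lin_ext G f) \<Longrightarrow> \<exists>w\<in>Supp f. a \<in> Supp (G w)"
  unfolding lin_ext_def using Supp_sum_sub[where I="Supp f" and c=f and h=G] by (auto simp: Supp_def)

lemma finite_Supp_lin_ext: "finite (Supp f) \<Longrightarrow> (\<And>w. finite (Supp (G w))) \<Longrightarrow> finite (Supp (lin_ext G f))"
  unfolding lin_ext_def by (rule finite_Supp_sum) auto

lemma carrier_word_ring [simp]: "carrier (word_ring A) = A"
  by (simp add: word_ring_def)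

lemma word_ring_ring:
  assumes z: "(\<lambda>a. 0) \<in> A" and o: "delta [] \<in> A"
    and ad: "\<And>f g. f \<in> A \<Longrightarrow> g \<in> A \<Longrightarrow> (\<lambda>a. f a + g a) \<in> A"
    and ng: "\<And>f. f \<in> A \<Longrightarrow> (\<lambda>a. - f a) \<in> A"
    and cv: "\<And>f g. f \<in> A \<Longrightarrow> g \<in> A \<Longrightarrow> conv f g \<in> A"
  shows "ring (word_ring A)"
proof -
  have one: "(\<lambda>a. if a = [] then 1 else 0) = delta []" by (simp add: delta_def)
  show ?thesis
  proof (rule ringI)
    show "abelian_group (word_ring A)"
    proof (rule abelian_groupI)
      fix x assume "x \<in> carrier (word_ring A)"
      then show "\<exists>y\<in>carrier (word_ring A). y \<oplus>\<^bsub>word_ring A\<^esub> x = \<zero>\<^bsub>word_ring A\<^esub>"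
        by (intro bexI[of _ "\<lambda>a. - x a"]) (auto simp: word_ring_def ng)
    qed (auto simp: word_ring_def z ad add_ac)
    show "monoid (word_ring A)"
      by (rule monoidI) (auto simp: word_ring_def cv one o conv_assoc conv_delta_Nil_left conv_delta_Nil_right)
  qed (auto simp: word_ring_def conv_add_left conv_add_right)
qed

lemma word_ring_minus:
  assumes "ring (word_ring A)" "f \<in> A"
  shows "\<ominus>\<^bsub>word_ring A\<^esub> f = (\<lambda>a. - f a)"
proof -
  interpret R: ring "word_ring A" by fact
  have "\<ominus>\<^bsub>word_ring A\<^esub> f \<oplus>\<^bsub>word_ring A\<^esub> f = \<zero>\<^bsub>word_ring A\<^esub>"
    using assms(2) R.l_neg by (simp add: word_ring_def)
  then have h: "(\<lambda>a. (\<ominus>\<^bsub>word_ring A\<^esub> f) a + f a) = (\<lambda>a. 0)" by (simp add: word_ring_def)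
  show ?thesis
  proof
    fix a
    from fun_cong[OF h, of a] have "(\<ominus>\<^bsub>word_ring A\<^esub> f) a + f a = 0" by simp
    then show "(\<ominus>\<^bsub>word_ring A\<^esub> f) a = - f a" by (simp add: eq_neg_iff_add_eq_0)
  qed
qed

lemma ideal_wordI:
  assumes R: "ring (word_ring A)" and sub: "K \<subseteq> A" and z: "(\<lambda>a. 0) \<in> K"
    and ad: "\<And>f g. f \<in> K \<Longrightarrow> g \<in> K \<Longrightarrow> (\<lambda>a. f a + g a) \<in> K"
    and ng: "\<And>f. f \<in> K \<Longrightarrow> (\<lambda>a. - f a) \<in> K"
    and lc: "\<And>f h. f \<in> K \<Longrightarrow> h \<in> A \<Longrightarrow> conv h f \<in> K"
    and rc: "\<And>f h. f \<in> K \<Longrightarrow> h \<in> A \<Longrightarrow> conv f h \<in> K"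
  shows "ideal K (word_ring A)"
proof -
  interpret R: ring "word_ring A" by fact
  show ?thesis
  proof (rule idealI[OF R])
    show "subgroup K (add_monoid (word_ring A))"
    proof (rule R.add.subgroupI)
      fix a assume a: "a \<in> K"
      have "\<ominus>\<^bsub>word_ring A\<^esub> a = (\<lambda>x. - a x)"
        using word_ring_minus[OF R, of a] sub a by auto
      then show "\<ominus>\<^bsub>word_ring A\<^esub> a \<in> K" using ng a by simp
    qed (use sub z ad in \<open>auto simp: word_ring_def\<close>)
  qed (auto simp: word_ring_def lc rc)
qed



lemma ring_hom_word_ring_mono:
  "A \<subseteq> B \<Longrightarrow> h \<in> ring_hom (word_ring B) R \<Longrightarrow> h \<in> ring_hom (word_ring A) R"
  unfolding ring_hom_def word_ring_def by (auto simp: Pi_iff subset_iff)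

section \<open>Weights and local finiteness\<close>

definition weight :: "(int \<times> 'r) list \<Rightarrow> int" where "weight a = sum_list (map fst a)"

lemma weight_append[simp]: "weight (a @ b) = weight a + weight b" by (simp add: weight_def)

lemma weight_Cons[simp]: "weight (x # b) = fst x + weight b" by (simp add: weight_def)

lemma weight_Nil[simp]: "weight [] = 0" by (simp add: weight_def)

lemma word_le_weight: "word_le a j \<longleftrightarrow> (\<forall>l<length a. weight (drop l a) \<le> j)"
  by (simp add: word_le_def weight_def)

lemma word_le_append:
  assumes "word_le (b @ c) j"
  shows "word_le c j" "word_le b (j - weight c)"
proof -
  show "word_le c j" unfolding word_le_weight
  proof (intro allI impI)
    fix l assume "l < length c"
    then have lt: "length b + l < length (b @ c)" by simp
    from assms have "\<forall>l<length (b @ c). weight (drop l (b @ c)) \<le> j" by (simp only: word_le_weight)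
    with lt have "weight (drop (length b + l) (b @ c)) \<le> j" by blast
    moreover have "drop (length b + l) (b @ c) = drop l c" by simp
    ultimately show "weight (drop l c) \<le> j" by metis
  qed
  show "word_le b (j - weight c)" unfolding word_le_weight
  proof (intro allI impI)
    fix l assume "l < length b"
    then have "l < length (b @ c)" by simp
    with assms have "weight (drop l (b @ c)) \<le> j" by (simp add: word_le_weight)
    with \<open>l < length b\<close> show "weight (drop l b) \<le> j - weight c" by simp
  qed
qed

lemma word_le_mono: "word_le a j \<Longrightarrow> j \<le> k \<Longrightarrow> word_le a k"
  by (auto simp: word_le_def)

definition locally_finite :: "((int \<times> 'r) list \<Rightarrow> complex) \<Rightarrow> bool" where
  "locally_finite \<mu> \<longleftrightarrow> (\<forall>j. finite {a \<in> Supp \<mu>. word_le a j})"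

lemma finite_Supp_locally_finite: "finite (Supp \<mu>) \<Longrightarrow> locally_finite \<mu>"
  by (auto simp: locally_finite_def)

lemma locally_finite_conv:
  assumes f: "locally_finite f" and g: "locally_finite g"
  shows "locally_finite (conv f g)"
  unfolding locally_finite_def
proof
  fix j
  define Wg where "Wg = {c \<in> Supp g. word_le c j}"
  have fWg: "finite Wg" using g by (simp add: locally_finite_def Wg_def)
  define m0 where "m0 = (\<Sum>c\<in>Wg. \<bar>weight c\<bar>)"
  define Wf where "Wf = {b \<in> Supp f. word_le b (j + m0)}"
  have fWf: "finite Wf" using f by (simp add: locally_finite_def Wf_def)
  have "{a \<in> Supp (conv f g). word_le a j} \<subseteq> (\<lambda>(b,c). b @ c) ` (Wf \<times> Wg)"
  proof
    fix a assume a: "a \<in> {a \<in> Supp (conv f g). word_le a j}"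
    then obtain b c where abc: "a = b @ c" "b \<in> Supp f" "c \<in> Supp g" using Supp_conv by blast
    with a have c: "c \<in> Wg" using word_le_append(1) by (auto simp: Wg_def)
    have "\<bar>weight c\<bar> \<le> m0" unfolding m0_def
      using c fWg by (intro member_le_sum) auto
    then have "j - weight c \<le> j + m0" by simp
    then have "b \<in> Wf" using abc a word_le_append(2) word_le_mono by (fastforce simp: Wf_def)
    with c abc show "a \<in> (\<lambda>(b,c). b @ c) ` (Wf \<times> Wg)" by auto
  qed
  then show "finite {a \<in> Supp (conv f g). word_le a j}"
    by (rule finite_subset) (intro finite_imageI finite_cartesian_product fWf fWg)
qed

lemma locally_finite_add: "locally_finite f \<Longrightarrow> locally_finite g \<Longrightarrow> locally_finite (\<lambda>a. f a + g a)"
  unfolding locally_finite_def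
proof
  fix j assume "\<forall>j. finite {a \<in> Supp f. word_le a j}" "\<forall>j. finite {a \<in> Supp g. word_le a j}"
  then have "finite ({a \<in> Supp f. word_le a j} \<union> {a \<in> Supp g. word_le a j})" by auto
  moreover have "{a \<in> Supp (\<lambda>a. f a + g a). word_le a j} \<subseteq> {a \<in> Supp f. word_le a j} \<union> {a \<in> Supp g. word_le a j}"
    using Supp_add by fastforce
  ultimately show "finite {a \<in> Supp (\<lambda>a. f a + g a). word_le a j}" by (rule finite_subset[rotated])
qed

lemma locally_finite_scal: "locally_finite f \<Longrightarrow> locally_finite (\<lambda>a. c * f a)"
  unfolding locally_finite_def
proof
  fix j assume "\<forall>j. finite {a \<in> Supp f. word_le a j}"
  then have "finite {a \<in> Supp f. word_le a j}" by blast
  then show "finite {a \<in> Supp (\<lambda>a. c * f a). word_le a j}"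
    by (rule finite_subset[rotated]) (auto simp: Supp_def)
qed

lemma M_minus_Cons: "(y # w) \<in> M_minus S \<longleftrightarrow> fst y \<le> -1 \<and> snd y \<in> S \<and> w \<in> M_minus S"
  by (cases y) (auto simp: M_minus_def)

lemma M_minus_Nil[simp]: "[] \<in> M_minus S"
  by (simp add: M_minus_def)

lemma M_minus_append: "a \<in> M_minus S \<Longrightarrow> b \<in> M_minus S \<Longrightarrow> a @ b \<in> M_minus S"
  by (simp add: M_minus_def)

lemma lists_drop: "a \<in> lists A \<Longrightarrow> drop l a \<in> lists A"
  by (auto simp: in_lists_conv_set dest: in_set_dropD)

lemma weight_M_minus: "a \<in> M_minus S \<Longrightarrow> weight a \<le> 0"
  by (induction a) (auto simp: M_minus_Cons)

lemma M_minus_word_le: "a \<in> M_minus S \<Longrightarrow> word_le a 0"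
proof -
  assume a: "a \<in> M_minus S"
  have "weight (drop l a) \<le> 0" for l
    using weight_M_minus[of "drop l a" S] a by (simp add: M_minus_def lists_drop)
  then show ?thesis by (simp add: word_le_weight)
qed

section \<open>The loop algebra acting on words\<close>

type_synonym 'g letter = "int \<times> ('g \<Rightarrow> complex)"
type_synonym 'g struct_consts = "('g \<Rightarrow> complex) \<Rightarrow> ('g \<Rightarrow> complex) \<Rightarrow> complex"

definition letter_add :: "'g letter \<Rightarrow> 'g letter \<Rightarrow> 'g letter" where
  "letter_add p q = (fst p + fst q, radd (snd p) (snd q))"

lemma radd_comm: "radd a b = radd b a" by (auto simp: radd_def add.commute)

lemma radd_assoc: "radd (radd a b) c = radd a (radd b c)" by (auto simp: radd_def add.assoc)

lemma fst_letter_add[simp]: "fst (letter_add p q) = fst p + fst q" by (simp add: letter_add_def)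

lemma snd_letter_add[simp]: "snd (letter_add p q) = radd (snd p) (snd q)" by (simp add: letter_add_def)

lemma letter_add_comm: "letter_add p q = letter_add q p" by (simp add: letter_add_def radd_comm add.commute)

lemma letter_add_assoc: "letter_add (letter_add a b) c = letter_add a (letter_add b c)" by (simp add: letter_add_def radd_assoc add.assoc)

text \<open>
  \<open>rep C l\<close> is the operator of \<open>x_\<beta> \<otimes> t^m\<close>, \<open>l = (m, \<beta>)\<close>, on the module induced from the trivial
  module of \<open>n_S \<otimes> C[t]\<close>, i.e. on \<open>U(n_S-)\<close> with the empty word as vacuum.
\<close>

fun rep_basis :: "'g struct_consts \<Rightarrow> 'g letter \<Rightarrow> 'g letter list \<Rightarrow> 'g letter list \<Rightarrow> complex" where
  "rep_basis C l [] = (if fst l \<le> -1 then delta [l] else (\<lambda>a. 0))"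
| "rep_basis C l (y # w) = (if fst l \<le> -1 then delta (l # y # w)
      else (\<lambda>a. letter_mult y (rep_basis C l w) a + C (snd l) (snd y) * rep_basis C (letter_add l y) w a))"

definition rep :: "'g struct_consts \<Rightarrow> 'g letter \<Rightarrow> ('g letter list \<Rightarrow> complex) \<Rightarrow> 'g letter list \<Rightarrow> complex"
  where "rep C l f = lin_ext (rep_basis C l) f"

lemma rep_basis_neg: "fst l \<le> -1 \<Longrightarrow> rep_basis C l w = delta (l # w)"
  by (cases w) auto

lemma finite_Supp_rep_basis: "finite (Supp (rep_basis C l w))"
proof (induction w arbitrary: l)
  case Nil then show ?case by (simp add: Supp_def delta_def)
next
  case (Cons y w)
  show ?case
  proof (cases "fst l \<le> -1")
    case True then show ?thesis by simp
  next
    case False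
    have f1: "finite (Supp (letter_mult y (rep_basis C l w)))" by (rule finite_Supp_letter_mult[OF Cons.IH])
    have f2: "finite (Supp (\<lambda>a. C (snd l) (snd y) * rep_basis C (letter_add l y) w a))"
      by (rule finite_subset[OF Supp_scal Cons.IH])
    have "finite (Supp (\<lambda>a. letter_mult y (rep_basis C l w) a + C (snd l) (snd y) * rep_basis C (letter_add l y) w a))"
      by (rule finite_subset[OF Supp_add]) (use f1 f2 in simp)
    then show ?thesis using False by simp
  qed
qed

lemma finite_Supp_rep: "finite (Supp f) \<Longrightarrow> finite (Supp (rep C l f))"
  unfolding rep_def by (rule finite_Supp_lin_ext) (auto intro: finite_Supp_rep_basis)

lemma rep_delta: "rep C l (delta w) = rep_basis C l w"
  by (simp add: rep_def lin_ext_delta)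

lemma rep_neg: assumes "fst l \<le> -1" "finite (Supp f)" shows "rep C l f = letter_mult l f"
proof -
  have "rep_basis C l = (\<lambda>w. delta (l # w))" by (rule ext) (simp add: rep_basis_neg assms(1))
  then have "rep C l f = lin_ext (\<lambda>w. letter_mult l (delta w)) f"
    unfolding rep_def by (simp add: letter_mult_delta)
  also have "\<dots> = letter_mult l (lin_ext delta f)" by (simp add: letter_mult_lin_ext)
  finally show ?thesis using assms(2) by (simp add: lin_ext_delta_self)
qed

lemma rep_nonneg_letter_mult:
  assumes "\<not> fst l \<le> -1"
  shows "rep C l (letter_mult y g) = (\<lambda>a. letter_mult y (rep C l g) a + C (snd l) (snd y) * rep C (letter_add l y) g a)"
proof -
  have "rep C l (letter_mult y g) = lin_ext (\<lambda>w. rep_basis C l (y # w)) g" by (simp add: rep_def lin_ext_letter_mult)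
  also have "\<dots> = lin_ext (\<lambda>w a. letter_mult y (rep_basis C l w) a + C (snd l) (snd y) * rep_basis C (letter_add l y) w a) g"
    using assms by simp
  also have "\<dots> = (\<lambda>a. lin_ext (\<lambda>w. letter_mult y (rep_basis C l w)) g a + C (snd l) (snd y) * lin_ext (rep_basis C (letter_add l y)) g a)"
    by (rule lin_ext_family_add)
  finally show ?thesis by (simp add: rep_def letter_mult_lin_ext)
qed

lemma rep_nonneg_Nil: "\<not> fst l \<le> -1 \<Longrightarrow> rep C l (delta []) = (\<lambda>a. 0)"
  by (simp add: rep_delta)

lemma rep_add: "finite (Supp f) \<Longrightarrow> finite (Supp g) \<Longrightarrow> rep C l (\<lambda>a. f a + g a) = (\<lambda>a. rep C l f a + rep C l g a)"
  by (simp add: rep_def lin_ext_add)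

lemma rep_scal: "finite (Supp f) \<Longrightarrow> rep C l (\<lambda>a. c * f a) = (\<lambda>a. c * rep C l f a)"
  by (simp add: rep_def lin_ext_scal)

lemma rep_zero[simp]: "rep C l (\<lambda>a. 0) = (\<lambda>a. 0)"
  by (simp add: rep_def)

lemma rep_sum: "finite I \<Longrightarrow> (\<And>i. i \<in> I \<Longrightarrow> finite (Supp (h i))) \<Longrightarrow>
   rep C l (\<lambda>a. \<Sum>i\<in>I. c i * h i a) = (\<lambda>a. \<Sum>i\<in>I. c i * rep C l (h i) a)"
  by (simp add: rep_def lin_ext_sum)

lemma weight_rep_basis: "a \<in> Supp (rep_basis C l w) \<Longrightarrow> weight a = fst l + weight w"
proof (induction w arbitrary: l a)
  case Nil then show ?case by (auto simp: Supp_def delta_def split: if_splits)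
next
  case (Cons y w)
  show ?case
  proof (cases "fst l \<le> -1")
    case True then show ?thesis using Cons.prems by (auto simp: Supp_def delta_def split: if_splits)
  next
    case False
    then have "a \<in> Supp (letter_mult y (rep_basis C l w)) \<or> a \<in> Supp (rep_basis C (letter_add l y) w)"
      using Cons.prems by (auto simp: Supp_def)
    then show ?thesis
    proof
      assume "a \<in> Supp (letter_mult y (rep_basis C l w))"
      then obtain a' where "a = y # a'" "a' \<in> Supp (rep_basis C l w)" by (auto simp: Supp_letter_mult)
      then show ?thesis using Cons.IH by auto
    next
      assume "a \<in> Supp (rep_basis C (letter_add l y) w)"
      then show ?thesis using Cons.IH by auto
    qed
  qed
qed

lemma weight_rep: "a \<in> Supp (rep C l f) \<Longrightarrow> \<exists>w\<in>Supp f. weight a = fst l + weight w"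
proof -
  assume "a \<in> Supp (rep C l f)"
  then obtain w where "w \<in> Supp f" "a \<in> Supp (rep_basis C l w)" unfolding rep_def using Supp_lin_ext by blast
  then show ?thesis using weight_rep_basis by blast
qed



fun rep_word :: "'g struct_consts \<Rightarrow> 'g letter list \<Rightarrow> ('g letter list \<Rightarrow> complex) \<Rightarrow> 'g letter list \<Rightarrow> complex"
  where
  "rep_word C [] f = f"
| "rep_word C (l # c) f = rep C l (rep_word C c f)"

lemma rep_word_append: "rep_word C (b @ c) f = rep_word C b (rep_word C c f)"
  by (induction b) auto

lemma rep_word_zero[simp]: "rep_word C c (\<lambda>x. 0) = (\<lambda>x. 0)"
  by (induction c) auto

lemma finite_Supp_rep_word: "finite (Supp f) \<Longrightarrow> finite (Supp (rep_word C c f))"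
  by (induction c) (auto intro: finite_Supp_rep)

lemma rep_word_sum: "finite I \<Longrightarrow> (\<And>i. i \<in> I \<Longrightarrow> finite (Supp (h i))) \<Longrightarrow>
   rep_word C c (\<lambda>x. \<Sum>i\<in>I. k i * h i x) = (\<lambda>x. \<Sum>i\<in>I. k i * rep_word C c (h i) x)"
proof (induction c)
  case Nil then show ?case by simp
next
  case (Cons l c)
  then show ?case by (simp add: rep_sum finite_Supp_rep_word)
qed

lemma weight_rep_word: "a \<in> Supp (rep_word C c f) \<Longrightarrow> \<exists>w\<in>Supp f. weight a = weight c + weight w"
proof (induction c arbitrary: a)
  case Nil then show ?case by auto
next
  case (Cons l c)
  then obtain a' where "a' \<in> Supp (rep_word C c f)" "weight a = fst l + weight a'" using weight_rep by fastforce
  then show ?case using Cons.IH by fastforce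
qed

definition weight_bound :: "((int \<times> 'r) list \<Rightarrow> complex) \<Rightarrow> int" where
  "weight_bound f = (\<Sum>w\<in>Supp f. \<bar>weight w\<bar>)"

lemma weight_le_weight_bound: "finite (Supp f) \<Longrightarrow> w \<in> Supp f \<Longrightarrow> \<bar>weight w\<bar> \<le> weight_bound f"
  unfolding weight_bound_def by (rule member_le_sum) auto

definition rep_F_support :: "((int \<times> 'r) list \<Rightarrow> complex) \<Rightarrow> ((int \<times> 'r) list \<Rightarrow> complex) \<Rightarrow> (int \<times> 'r) list set"
  where "rep_F_support \<mu> f = {c \<in> Supp \<mu>. word_le c (weight_bound f)}"

text \<open>
  Only words \<open>c\<close> with \<open>word_le c (weight_bound f)\<close> can act nontrivially on \<open>f \<in> T\<close>
  (lemma rep_word_nonzero_word_le), so this finite sum is the action of a locally finite \<open>\<mu>\<close>.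
\<close>

definition rep_F :: "'g struct_consts \<Rightarrow> ('g letter list \<Rightarrow> complex) \<Rightarrow> ('g letter list \<Rightarrow> complex) \<Rightarrow> 'g letter list \<Rightarrow> complex"
  where "rep_F C \<mu> f = (\<lambda>x. \<Sum>c\<in>rep_F_support \<mu> f. \<mu> c * rep_word C c f x)"

lemma rel_eq: "rel C \<alpha> \<beta> m l = (\<lambda>a. delta [(m,\<alpha>),(l,\<beta>)] a - delta [(l,\<beta>),(m,\<alpha>)] a
      - C \<alpha> \<beta> * delta [(m+l, radd \<alpha> \<beta>)] a)"
  by (simp add: rel_def Xw_eq_delta conv_delta_delta)

section \<open>Words in negative letters modulo the relations\<close>

locale root_data =
  fixes S :: "('g \<Rightarrow> complex) set" and C :: "'g struct_consts"
  assumes C_closed: "\<lbrakk>\<alpha> \<in> S; \<beta> \<in> S; C \<alpha> \<beta> \<noteq> 0\<rbrakk> \<Longrightarrow> radd \<alpha> \<beta> \<in> S"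
    and C_antisym: "\<lbrakk>\<alpha> \<in> S; \<beta> \<in> S\<rbrakk> \<Longrightarrow> C \<alpha> \<beta> = - C \<beta> \<alpha>"
    and C_jacobi: "\<lbrakk>a \<in> S; b \<in> S; y \<in> S\<rbrakk> \<Longrightarrow>
       C a b * C (radd a b) y = C a y * C (radd a y) b + C b y * C a (radd b y)"
begin

abbreviation "T \<equiv> T_minus_carrier S"
abbreviation "J \<equiv> J_minus S C"
abbreviation "F \<equiv> F_carrier S"
abbreviation "\<rho> \<equiv> rep C"

lemma T_iff: "f \<in> T \<longleftrightarrow> finite (Supp f) \<and> Supp f \<subseteq> M_minus S"
  by (simp add: T_minus_carrier_def)

lemma T_finite: "f \<in> T \<Longrightarrow> finite (Supp f)" by (simp add: T_iff)

lemma T_zero: "(\<lambda>a. 0) \<in> T" by (simp add: T_iff)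

lemma T_delta: "w \<in> M_minus S \<Longrightarrow> delta w \<in> T" by (simp add: T_iff)

lemma T_add: assumes "f \<in> T" "g \<in> T" shows "(\<lambda>a. f a + g a) \<in> T"
proof -
  have fin: "finite (Supp (\<lambda>a. f a + g a))" by (rule finite_subset[OF Supp_add]) (use assms in \<open>simp add: T_iff\<close>)
  have "Supp (\<lambda>a. f a + g a) \<subseteq> M_minus S" using Supp_add[of f g] assms by (auto simp: T_iff)
  then show ?thesis using fin by (simp add: T_iff)
qed

lemma T_scal: assumes "f \<in> T" shows "(\<lambda>a. c * f a) \<in> T"
proof -
  have fin: "finite (Supp (\<lambda>a. c * f a))" by (rule finite_subset[OF Supp_scal]) (use assms in \<open>simp add: T_iff\<close>)
  have "Supp (\<lambda>a. c * f a) \<subseteq> M_minus S" using Supp_scal[of c f] assms by (auto simp: T_iff)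
  then show ?thesis using fin by (simp add: T_iff)
qed

lemma T_neg: "f \<in> T \<Longrightarrow> (\<lambda>a. - f a) \<in> T"
  unfolding T_iff by simp

lemma T_conv: "f \<in> T \<Longrightarrow> g \<in> T \<Longrightarrow> conv f g \<in> T"
proof -
  assume f: "f \<in> T" and g: "g \<in> T"
  have "finite ((\<lambda>(b,c). b @ c) ` (Supp f \<times> Supp g))" using f g by (simp add: T_iff)
  moreover have "(\<lambda>(b,c). b @ c) ` (Supp f \<times> Supp g) \<subseteq> M_minus S"
    using f g by (auto simp: T_iff intro!: M_minus_append)
  ultimately have "finite (Supp (conv f g))" "Supp (conv f g) \<subseteq> M_minus S"
    using Supp_conv_subset[of f g] by (auto dest: finite_subset)
  then show ?thesis by (simp add: T_iff)
qed

lemma T_sum: "finite I \<Longrightarrow> (\<And>i. i \<in> I \<Longrightarrow> h i \<in> T) \<Longrightarrow> (\<lambda>a. \<Sum>i\<in>I. c i * h i a) \<in> T"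
proof (induction I rule: finite_induct)
  case empty then show ?case by (simp add: T_zero)
next
  case (insert i I)
  then show ?case by (simp add: T_add T_scal)
qed

lemma T_ring: "ring (word_ring T)"
proof (rule word_ring_ring)
  show "delta [] \<in> T" by (simp add: T_delta)
qed (auto simp: T_zero T_add T_neg T_conv)

lemma rel_T: "\<lbrakk>\<alpha> \<in> S; \<beta> \<in> S; m \<le> -1; l \<le> -1\<rbrakk> \<Longrightarrow> rel C \<alpha> \<beta> m l \<in> T"
proof -
  assume a: "\<alpha> \<in> S" "\<beta> \<in> S" "m \<le> -1" "l \<le> -1"
  have i1: "delta [(m,\<alpha>),(l,\<beta>)] \<in> T" and i2: "delta [(l,\<beta>),(m,\<alpha>)] \<in> T"
    using a by (auto intro!: T_delta simp: M_minus_def)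
  have i3: "(\<lambda>x. C \<alpha> \<beta> * delta [(m+l, radd \<alpha> \<beta>)] x) \<in> T"
  proof (cases "C \<alpha> \<beta> = 0")
    case True then show ?thesis by (simp add: T_zero)
  next
    case False then have "radd \<alpha> \<beta> \<in> S" using C_closed a by blast
    then show ?thesis using a by (auto intro!: T_scal T_delta simp: M_minus_def)
  qed
  have "rel C \<alpha> \<beta> m l = (\<lambda>x. (delta [(m,\<alpha>),(l,\<beta>)] x + - delta [(l,\<beta>),(m,\<alpha>)] x) + - (C \<alpha> \<beta> * delta [(m+l, radd \<alpha> \<beta>)] x))"
    by (simp add: rel_eq)
  also have "\<dots> \<in> T"
    using T_add[OF T_add[OF i1 T_neg[OF i2]] T_neg[OF i3]] by simp
  finally show ?thesis .
qed

definition J_generators :: "('g letter list \<Rightarrow> complex) set" where "J_generators = {rel C \<alpha> \<beta> m l | \<alpha> \<beta> m l. \<alpha> \<in> S \<and> \<beta> \<in> S \<and> m \<le> -1 \<and> l \<le> -1}"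

lemma J_generators_T: "J_generators \<subseteq> T"
  using rel_T by (auto simp: J_generators_def)

lemma J_eq_genideal: "J = genideal (word_ring T) J_generators"
  by (simp add: J_minus_def J_generators_def)

lemma J_ideal: "ideal J (word_ring T)"
proof -
  interpret R: ring "word_ring T" by (rule T_ring)
  show ?thesis unfolding J_eq_genideal by (rule R.genideal_ideal) (use J_generators_T in \<open>simp add: word_ring_def\<close>)
qed

lemma rel_J: "\<lbrakk>\<alpha> \<in> S; \<beta> \<in> S; m \<le> -1; l \<le> -1\<rbrakk> \<Longrightarrow> rel C \<alpha> \<beta> m l \<in> J"
proof -
  assume a: "\<alpha> \<in> S" "\<beta> \<in> S" "m \<le> -1" "l \<le> -1"
  interpret R: ring "word_ring T" by (rule T_ring)
  have "J_generators \<subseteq> J" unfolding J_eq_genideal by (rule R.genideal_self) (use J_generators_T in \<open>simp add: word_ring_def\<close>)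
  moreover have "rel C \<alpha> \<beta> m l \<in> J_generators" using a unfolding J_generators_def by blast
  ultimately show ?thesis by (rule subsetD)
qed

lemma J_minimal: "ideal K (word_ring T) \<Longrightarrow> J_generators \<subseteq> K \<Longrightarrow> J \<subseteq> K"
proof -
  assume "ideal K (word_ring T)" "J_generators \<subseteq> K"
  interpret R: ring "word_ring T" by (rule T_ring)
  show ?thesis unfolding J_eq_genideal by (rule R.genideal_minimal) fact+
qed

lemma J_T: "f \<in> J \<Longrightarrow> f \<in> T"
  using ideal.I_l_closed[OF J_ideal] additive_subgroup.a_subset[OF ideal.axioms(1)[OF J_ideal]]
  by (auto simp: word_ring_def)

lemma J_zero: "(\<lambda>a. 0) \<in> J"
  using additive_subgroup.zero_closed[OF ideal.axioms(1)[OF J_ideal]] by (simp add: word_ring_def)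

lemma J_add: "f \<in> J \<Longrightarrow> g \<in> J \<Longrightarrow> (\<lambda>a. f a + g a) \<in> J"
  using additive_subgroup.a_closed[OF ideal.axioms(1)[OF J_ideal]] by (simp add: word_ring_def)

lemma J_lconv: "f \<in> J \<Longrightarrow> h \<in> T \<Longrightarrow> conv h f \<in> J"
  using ideal.I_l_closed[OF J_ideal] by (simp add: word_ring_def)

lemma J_rconv: "f \<in> J \<Longrightarrow> h \<in> T \<Longrightarrow> conv f h \<in> J"
  using ideal.I_r_closed[OF J_ideal] by (simp add: word_ring_def)

lemma constw_T: "constw c \<in> T"
proof -
  have "Supp (constw c) \<subseteq> {[]}" by (auto simp: Supp_def constw_def)
  then show ?thesis unfolding T_iff by (auto intro: finite_subset)
qed

lemma J_scal: "f \<in> J \<Longrightarrow> (\<lambda>a. c * f a) \<in> J"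
  using J_lconv[OF _ constw_T, of f c] by (simp add: conv_constw)

lemma J_neg: "f \<in> J \<Longrightarrow> (\<lambda>a. - f a) \<in> J"
  using J_scal[of f "-1"] by simp

lemma J_letter_mult: "f \<in> J \<Longrightarrow> fst y \<le> -1 \<Longrightarrow> snd y \<in> S \<Longrightarrow> letter_mult y f \<in> J"
  using J_lconv[of f "delta [y]"] T_delta[of "[y]"] by (simp add: conv_delta_single M_minus_Cons)

lemma J_sum: "finite I \<Longrightarrow> (\<And>i. i \<in> I \<Longrightarrow> h i \<in> J) \<Longrightarrow> (\<lambda>a. \<Sum>i\<in>I. c i * h i a) \<in> J"
proof (induction I rule: finite_induct)
  case empty then show ?case by (simp add: J_zero)
next
  case (insert i I)
  then show ?case by (simp add: J_add J_scal)
qed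

lemma Supp_rep_basis_M_minus: "w \<in> M_minus S \<Longrightarrow> snd l \<in> S \<Longrightarrow> Supp (rep_basis C l w) \<subseteq> M_minus S"
proof (induction w arbitrary: l)
  case Nil then show ?case by (auto simp: Supp_def delta_def M_minus_Cons split: if_splits)
next
  case (Cons y w)
  show ?case
  proof (cases "fst l \<le> -1")
    case True then show ?thesis using Cons.prems by (auto simp: Supp_def delta_def M_minus_Cons split: if_splits)
  next
    case False
    have y: "fst y \<le> -1" "snd y \<in> S" "w \<in> M_minus S" using Cons.prems by (auto simp: M_minus_Cons)
    have s1: "Supp (letter_mult y (rep_basis C l w)) \<subseteq> M_minus S"
      using Cons.IH[OF y(3) Cons.prems(2)] y by (auto simp: Supp_letter_mult M_minus_Cons)
    have s2: "Supp (\<lambda>a. C (snd l) (snd y) * rep_basis C (letter_add l y) w a) \<subseteq> M_minus S"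
    proof (cases "C (snd l) (snd y) = 0")
      case True then show ?thesis by simp
    next
      case False
      then have "snd (letter_add l y) \<in> S" using C_closed Cons.prems y by auto
      then have "Supp (rep_basis C (letter_add l y) w) \<subseteq> M_minus S" by (rule Cons.IH[OF y(3)])
      with Supp_scal show ?thesis by (rule order_trans)
    qed
    have "Supp (\<lambda>a. letter_mult y (rep_basis C l w) a + C (snd l) (snd y) * rep_basis C (letter_add l y) w a) \<subseteq> M_minus S"
      using Supp_add[of "letter_mult y (rep_basis C l w)" "\<lambda>a. C (snd l) (snd y) * rep_basis C (letter_add l y) w a"] s1 s2 by auto
    then show ?thesis using False by simp
  qed
qed

lemma rep_T: "f \<in> T \<Longrightarrow> snd l \<in> S \<Longrightarrow> \<rho> l f \<in> T"
proof -
  assume f: "f \<in> T" and l: "snd l \<in> S"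
  have "Supp (\<rho> l f) \<subseteq> M_minus S"
  proof
    fix a assume "a \<in> Supp (\<rho> l f)"
    then obtain w where "w \<in> Supp f" "a \<in> Supp (rep_basis C l w)" unfolding rep_def using Supp_lin_ext by blast
    then show "a \<in> M_minus S" using Supp_rep_basis_M_minus[of w l] f l by (auto simp: T_iff)
  qed
  then show ?thesis using f by (simp add: T_iff finite_Supp_rep)
qed

lemma rep_word_T: "f \<in> T \<Longrightarrow> c \<in> lists (UNIV \<times> S) \<Longrightarrow> rep_word C c f \<in> T"
proof (induction c)
  case Nil then show ?case by simp
next
  case (Cons l c)
  then show ?case by (cases l) (auto intro: rep_T)
qed

definition letter_C :: "'g letter \<Rightarrow> 'g letter \<Rightarrow> complex" where
  "letter_C p q = C (snd p) (snd q)"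

definition rep_comm :: "'g letter \<Rightarrow> 'g letter \<Rightarrow> ('g letter list \<Rightarrow> complex) \<Rightarrow> 'g letter list \<Rightarrow> complex" where
  "rep_comm a b f = (\<lambda>x. \<rho> a (\<rho> b f) x - \<rho> b (\<rho> a f) x - letter_C a b * \<rho> (letter_add a b) f x)"

lemma letter_C_jacobi:
  "snd a \<in> S \<Longrightarrow> snd b \<in> S \<Longrightarrow> snd y \<in> S \<Longrightarrow>
   letter_C a y * letter_C (letter_add a y) b + letter_C b y * letter_C a (letter_add b y)
   - letter_C a b * letter_C (letter_add a b) y = 0"
  using C_jacobi[of "snd a" "snd b" "snd y"] by (simp add: letter_C_def)

lemma J_scal_letter_C:
  assumes "snd a \<in> S" "snd y \<in> S" and "snd (letter_add a y) \<in> S \<Longrightarrow> h \<in> J"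
  shows "(\<lambda>x. letter_C a y * h x) \<in> J"
proof (cases "letter_C a y = 0")
  case True then show ?thesis by (simp add: J_zero)
next
  case False
  then have "snd (letter_add a y) \<in> S" using C_closed assms(1,2) by (simp add: letter_C_def)
  then show ?thesis using assms(3) J_scal by blast
qed

lemma rep_add_scal: "finite (Supp f) \<Longrightarrow> finite (Supp g) \<Longrightarrow>
    \<rho> l (\<lambda>x. f x + c * g x) = (\<lambda>x. \<rho> l f x + c * \<rho> l g x)"
proof -
  assume f: "finite (Supp f)" and g: "finite (Supp g)"
  have "finite (Supp (\<lambda>x. c * g x))" by (rule finite_subset[OF Supp_scal g])
  then show ?thesis using f g by (simp add: rep_add rep_scal)
qed

lemma rep_diff_scal: "finite (Supp f) \<Longrightarrow> finite (Supp g) \<Longrightarrow> finite (Supp h) \<Longrightarrow>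
    \<rho> l (\<lambda>x. f x - g x - c * h x) = (\<lambda>x. \<rho> l f x - \<rho> l g x - c * \<rho> l h x)"
proof -
  assume f: "finite (Supp f)" and g: "finite (Supp g)" and h: "finite (Supp h)"
  have e: "(\<lambda>x. f x - g x - c * h x) = (\<lambda>x. (\<lambda>x. f x + (-1) * g x) x + (-c) * h x)" by simp
  have fg: "finite (Supp (\<lambda>x. f x + (-1) * g x))"
    by (rule finite_subset[OF Supp_add]) (use f g finite_subset[OF Supp_scal g] in auto)
  show ?thesis unfolding e rep_add_scal[OF fg h] rep_add_scal[OF f g] by simp
qed

lemma rep_nonneg_neg_swap:
  assumes "\<not> fst l \<le> -1" "fst y \<le> -1" "finite (Supp h)"
  shows "\<rho> l (\<rho> y h) = (\<lambda>x. \<rho> y (\<rho> l h) x + letter_C l y * \<rho> (letter_add l y) h x)"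
proof -
  have "\<rho> y h = letter_mult y h" using assms by (simp add: rep_neg)
  moreover have "\<rho> y (\<rho> l h) = letter_mult y (\<rho> l h)" using assms by (simp add: rep_neg finite_Supp_rep)
  ultimately show ?thesis using assms by (simp add: rep_nonneg_letter_mult letter_C_def)
qed

lemma rep_comm_neg_neg:
  assumes "m \<le> -1" "l \<le> -1" "finite (Supp f)"
  shows "rep_comm (m,\<alpha>) (l,\<beta>) f = conv (rel C \<alpha> \<beta> m l) f"
proof -
  have c2: "conv (delta [p, q]) f = letter_mult p (letter_mult q f)" for p q
  proof -
    have "delta [p, q] = conv (delta [p]) (delta [q])" by (simp only: conv_delta_delta append.simps)
    then have "conv (delta [p, q]) f = conv (delta [p]) (conv (delta [q]) f)" by (simp only: conv_assoc)
    then show ?thesis by (simp only: conv_delta_single)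
  qed
  have "conv (rel C \<alpha> \<beta> m l) f = (\<lambda>x. conv (delta [(m,\<alpha>),(l,\<beta>)]) f x - conv (delta [(l,\<beta>),(m,\<alpha>)]) f x
        - C \<alpha> \<beta> * conv (delta [(m+l, radd \<alpha> \<beta>)]) f x)"
    unfolding rel_eq conv_diff_left conv_scal_left[of "C \<alpha> \<beta>" "delta [(m+l, radd \<alpha> \<beta>)]"] by simp
  also have "\<dots> = (\<lambda>x. letter_mult (m,\<alpha>) (letter_mult (l,\<beta>) f) x - letter_mult (l,\<beta>) (letter_mult (m,\<alpha>) f) x
        - C \<alpha> \<beta> * letter_mult (m+l, radd \<alpha> \<beta>) f x)"
    by (simp add: c2 conv_delta_single)
  also have "\<dots> = rep_comm (m,\<alpha>) (l,\<beta>) f"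
    using assms by (simp add: rep_comm_def rep_neg finite_Supp_letter_mult letter_C_def letter_add_def)
  finally show ?thesis by simp
qed

lemma rep_comm_neg_neg_J:
  assumes "fst a \<le> -1" "fst b \<le> -1" "snd a \<in> S" "snd b \<in> S" "f \<in> T"
  shows "rep_comm a b f \<in> J"
proof -
  obtain m \<alpha> l \<beta> where ab: "a = (m,\<alpha>)" "b = (l,\<beta>)" by (cases a, cases b) auto
  have "rep_comm a b f = conv (rel C \<alpha> \<beta> m l) f" using assms ab by (simp add: rep_comm_neg_neg T_finite)
  also have "\<dots> \<in> J" using assms ab by (auto intro!: J_rconv rel_J)
  finally show ?thesis .
qed

lemma rep_comm_nonneg_neg:
  assumes "\<not> fst a \<le> -1" "fst b \<le> -1" "finite (Supp f)"
  shows "rep_comm a b f = (\<lambda>x. 0)"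
  using assms by (simp add: rep_comm_def rep_nonneg_neg_swap)

lemma rep_comm_neg_nonneg:
  assumes "fst a \<le> -1" "\<not> fst b \<le> -1" "snd a \<in> S" "snd b \<in> S" "finite (Supp f)"
  shows "rep_comm a b f = (\<lambda>x. 0)"
proof -
  have "letter_C a b = - letter_C b a" using C_antisym[of "snd a" "snd b"] assms by (simp add: letter_C_def)
  then show ?thesis using assms by (simp add: rep_comm_def rep_nonneg_neg_swap letter_add_comm)
qed

lemma rep_comm_letter_mult:
  assumes a: "\<not> fst a \<le> -1" and b: "\<not> fst b \<le> -1" and g: "finite (Supp g)"
  shows "rep_comm a b (letter_mult y g) = (\<lambda>x. letter_mult y (rep_comm a b g) x + letter_C a y * rep_comm (letter_add a y) b g x
     + letter_C b y * rep_comm a (letter_add b y) g x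
     + (letter_C a y * letter_C (letter_add a y) b + letter_C b y * letter_C a (letter_add b y) - letter_C a b * letter_C (letter_add a b) y) * \<rho> (letter_add (letter_add a b) y) g x)"
proof -
  have ab: "\<not> fst (letter_add a b) \<le> -1" using a b by simp
  have s1: "letter_add (letter_add a y) b = letter_add (letter_add a b) y" by (metis letter_add_assoc letter_add_comm)
  have s2: "letter_add a (letter_add b y) = letter_add (letter_add a b) y" by (simp add: letter_add_assoc)
  have eb: "\<rho> b (letter_mult y g) = (\<lambda>x. letter_mult y (\<rho> b g) x + letter_C b y * \<rho> (letter_add b y) g x)"
    using b by (simp add: rep_nonneg_letter_mult letter_C_def)
  have ea: "\<rho> a (letter_mult y g) = (\<lambda>x. letter_mult y (\<rho> a g) x + letter_C a y * \<rho> (letter_add a y) g x)"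
    using a by (simp add: rep_nonneg_letter_mult letter_C_def)
  have eab: "\<rho> (letter_add a b) (letter_mult y g) = (\<lambda>x. letter_mult y (\<rho> (letter_add a b) g) x + letter_C (letter_add a b) y * \<rho> (letter_add (letter_add a b) y) g x)"
    using ab by (simp add: rep_nonneg_letter_mult letter_C_def)
  have e1: "\<rho> a (\<rho> b (letter_mult y g)) = (\<lambda>x. letter_mult y (\<rho> a (\<rho> b g)) x + letter_C a y * \<rho> (letter_add a y) (\<rho> b g) x
       + letter_C b y * \<rho> a (\<rho> (letter_add b y) g) x)"
    unfolding eb using a g by (simp add: rep_add_scal finite_Supp_rep finite_Supp_letter_mult rep_nonneg_letter_mult letter_C_def)
  have e2: "\<rho> b (\<rho> a (letter_mult y g)) = (\<lambda>x. letter_mult y (\<rho> b (\<rho> a g)) x + letter_C b y * \<rho> (letter_add b y) (\<rho> a g) x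
       + letter_C a y * \<rho> b (\<rho> (letter_add a y) g) x)"
    unfolding ea using b g by (simp add: rep_add_scal finite_Supp_rep finite_Supp_letter_mult rep_nonneg_letter_mult letter_C_def)
  show ?thesis
    unfolding rep_comm_def e1 e2 eab s1 s2
    by (rule ext) (simp add: letter_mult_def algebra_simps split: list.split)
qed

lemma rep_comm_J_if_neg:
  assumes "fst a \<le> -1 \<or> fst b \<le> -1" "snd a \<in> S" "snd b \<in> S" "f \<in> T"
  shows "rep_comm a b f \<in> J"
  using assms rep_comm_neg_neg_J[of a b f] rep_comm_neg_nonneg[of a b f] rep_comm_nonneg_neg[of a b f]
  by (cases "fst a \<le> -1"; cases "fst b \<le> -1") (auto simp: T_finite J_zero)

lemma rep_comm_delta_J:
  "w \<in> M_minus S \<Longrightarrow> snd a \<in> S \<Longrightarrow> snd b \<in> S \<Longrightarrow> rep_comm a b (delta w) \<in> J"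
proof (induction w arbitrary: a b)
  case Nil
  then show ?case
    using rep_comm_J_if_neg[of a b "delta []"]
    by (cases "fst a \<le> -1 \<or> fst b \<le> -1") (auto simp: T_delta rep_comm_def rep_nonneg_Nil J_zero)
next
  case (Cons y w)
  have y: "fst y \<le> -1" "snd y \<in> S" and w: "w \<in> M_minus S" using Cons.prems by (auto simp: M_minus_Cons)
  show ?case
  proof (cases "fst a \<le> -1 \<or> fst b \<le> -1")
    case True then show ?thesis using Cons.prems by (intro rep_comm_J_if_neg) (auto intro: T_delta)
  next
    case False
    have t1: "letter_mult y (rep_comm a b (delta w)) \<in> J"
      using Cons.IH[OF w Cons.prems(2,3)] y by (rule J_letter_mult)
    have t2: "(\<lambda>x. letter_C a y * rep_comm (letter_add a y) b (delta w) x) \<in> J"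
      using Cons.prems y by (intro J_scal_letter_C Cons.IH[OF w]) auto
    have t3: "(\<lambda>x. letter_C b y * rep_comm a (letter_add b y) (delta w) x) \<in> J"
      using Cons.prems y by (intro J_scal_letter_C Cons.IH[OF w]) auto
    have "rep_comm a b (delta (y # w)) = (\<lambda>x. letter_mult y (rep_comm a b (delta w)) x
        + letter_C a y * rep_comm (letter_add a y) b (delta w) x
        + letter_C b y * rep_comm a (letter_add b y) (delta w) x)"
      using rep_comm_letter_mult[of a b "delta w" y] letter_C_jacobi[of a b y] False Cons.prems y
      by (simp add: letter_mult_delta)
    then show ?thesis using J_add[OF J_add[OF t1 t2] t3] by simp
  qed
qed

lemma rep_comm_sum:
  assumes "finite I" "\<And>i. i \<in> I \<Longrightarrow> finite (Supp (h i))"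
  shows "rep_comm a b (\<lambda>x. \<Sum>i\<in>I. c i * h i x) = (\<lambda>x. \<Sum>i\<in>I. c i * rep_comm a b (h i) x)"
proof -
  have s1: "\<rho> b (\<lambda>x. \<Sum>i\<in>I. c i * h i x) = (\<lambda>x. \<Sum>i\<in>I. c i * \<rho> b (h i) x)" using assms by (rule rep_sum)
  have s2: "\<rho> a (\<lambda>x. \<Sum>i\<in>I. c i * h i x) = (\<lambda>x. \<Sum>i\<in>I. c i * \<rho> a (h i) x)" using assms by (rule rep_sum)
  have s3: "\<rho> (letter_add a b) (\<lambda>x. \<Sum>i\<in>I. c i * h i x) = (\<lambda>x. \<Sum>i\<in>I. c i * \<rho> (letter_add a b) (h i) x)" using assms by (rule rep_sum)
  have s4: "\<rho> a (\<lambda>x. \<Sum>i\<in>I. c i * \<rho> b (h i) x) = (\<lambda>x. \<Sum>i\<in>I. c i * \<rho> a (\<rho> b (h i)) x)"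
    using assms by (intro rep_sum) (auto intro: finite_Supp_rep)
  have s5: "\<rho> b (\<lambda>x. \<Sum>i\<in>I. c i * \<rho> a (h i) x) = (\<lambda>x. \<Sum>i\<in>I. c i * \<rho> b (\<rho> a (h i)) x)"
    using assms by (intro rep_sum) (auto intro: finite_Supp_rep)
  show ?thesis
    unfolding rep_comm_def s1 s2 s3 s4 s5
    by (rule ext) (simp add: sum_subtractf sum_distrib_left right_diff_distrib mult.left_commute)
qed

lemma rep_comm_J: "f \<in> T \<Longrightarrow> snd a \<in> S \<Longrightarrow> snd b \<in> S \<Longrightarrow> rep_comm a b f \<in> J"
proof -
  assume f: "f \<in> T" and ab: "snd a \<in> S" "snd b \<in> S"
  have fin: "finite (Supp f)" using f by (rule T_finite)
  have "rep_comm a b f = rep_comm a b (\<lambda>x. \<Sum>w\<in>Supp f. f w * delta w x)" using expand_delta[OF fin] by simp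
  also have "\<dots> = (\<lambda>x. \<Sum>w\<in>Supp f. f w * rep_comm a b (delta w) x)" using fin by (intro rep_comm_sum) auto
  also have "\<dots> \<in> J"
  proof (rule J_sum[OF fin])
    fix w assume "w \<in> Supp f"
    then have "w \<in> M_minus S" using f by (auto simp: T_iff)
    then show "rep_comm a b (delta w) \<in> J" using ab by (rule rep_comm_delta_J)
  qed
  finally show ?thesis .
qed

lemma C_jacobi_derivation: "\<lbrakk>l \<in> S; y \<in> S; z \<in> S\<rbrakk> \<Longrightarrow>
   C y z * C l (radd y z) = C l z * C y (radd l z) + C l y * C (radd l y) z"
proof -
  assume s: "l \<in> S" "y \<in> S" "z \<in> S"
  have h: "C y z * C (radd y z) l = C y l * C (radd y l) z + C z l * C y (radd z l)"
    using C_jacobi[OF s(2) s(3) s(1)] .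
  have a1: "C y l = - C l y" using C_antisym[OF s(2) s(1)] .
  have a2: "C z l = - C l z" using C_antisym[OF s(3) s(1)] .
  have r1: "radd y l = radd l y" "radd z l = radd l z" by (simp_all add: radd_comm)
  show ?thesis
  proof (cases "C y z = 0")
    case True
    then show ?thesis using h a1 a2 r1 by (simp add: algebra_simps)
  next
    case False
    then have "radd y z \<in> S" using C_closed s by blast
    then have "C l (radd y z) = - C (radd y z) l" using C_antisym s by blast
    then have "C y z * C l (radd y z) = - (C y z * C (radd y z) l)" by simp
    also have "\<dots> = - (C y l * C (radd y l) z + C z l * C y (radd z l))" by (simp only: h)
    also have "\<dots> = C l z * C y (radd l z) + C l y * C (radd l y) z" by (simp add: a1 a2 r1 algebra_simps)
    finally show ?thesis .
  qed
qed

lemma letter_C_jacobi_derivation: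
  "snd p \<in> S \<Longrightarrow> snd y \<in> S \<Longrightarrow> snd z \<in> S \<Longrightarrow>
   letter_C p z * letter_C y (letter_add p z) + letter_C p y * letter_C (letter_add p y) z
   - letter_C y z * letter_C p (letter_add y z) = 0"
  using C_jacobi_derivation[of "snd p" "snd y" "snd z"] by (simp add: letter_C_def)

lemma rep_nonneg_rep_comm_neg_neg:
  assumes p: "\<not> fst p \<le> -1" and y: "fst y \<le> -1" and z: "fst z \<le> -1" and v: "finite (Supp v)"
  shows "\<rho> p (rep_comm y z v) = (\<lambda>x. rep_comm y z (\<rho> p v) x + letter_C p z * rep_comm y (letter_add p z) v x + letter_C p y * rep_comm (letter_add p y) z v x
     + (letter_C p z * letter_C y (letter_add p z) + letter_C p y * letter_C (letter_add p y) z - letter_C y z * letter_C p (letter_add y z)) * \<rho> (letter_add p (letter_add y z)) v x)"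
proof -
  have yz: "fst (letter_add y z) \<le> -1" using y z by simp
  have l1: "letter_add y (letter_add p z) = letter_add p (letter_add y z)" by (metis letter_add_assoc letter_add_comm)
  have l2: "letter_add (letter_add p y) z = letter_add p (letter_add y z)" by (simp add: letter_add_assoc)
  have fAz: "finite (Supp (\<rho> z v))" and fAy: "finite (Supp (\<rho> y v))" and fAp: "finite (Supp (\<rho> p v))"
    and fApz: "finite (Supp (\<rho> (letter_add p z) v))" and fApy: "finite (Supp (\<rho> (letter_add p y) v))"
    using v by (simp_all add: finite_Supp_rep)
  have e0: "\<rho> p (rep_comm y z v) = (\<lambda>x. \<rho> p (\<rho> y (\<rho> z v)) x - \<rho> p (\<rho> z (\<rho> y v)) x - letter_C y z * \<rho> p (\<rho> (letter_add y z) v) x)"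
    unfolding rep_comm_def using v by (intro rep_diff_scal) (simp_all add: finite_Supp_rep)
  have e1: "\<rho> p (\<rho> y (\<rho> z v)) = (\<lambda>x. \<rho> y (\<rho> p (\<rho> z v)) x + letter_C p y * \<rho> (letter_add p y) (\<rho> z v) x)"
    using p y fAz by (rule rep_nonneg_neg_swap)
  have e2: "\<rho> p (\<rho> z v) = (\<lambda>x. \<rho> z (\<rho> p v) x + letter_C p z * \<rho> (letter_add p z) v x)"
    using p z v by (rule rep_nonneg_neg_swap)
  have e3: "\<rho> y (\<rho> p (\<rho> z v)) = (\<lambda>x. \<rho> y (\<rho> z (\<rho> p v)) x + letter_C p z * \<rho> y (\<rho> (letter_add p z) v) x)"
    unfolding e2 by (intro rep_add_scal) (simp_all add: finite_Supp_rep fAp fApz)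
  have e4: "\<rho> p (\<rho> z (\<rho> y v)) = (\<lambda>x. \<rho> z (\<rho> p (\<rho> y v)) x + letter_C p z * \<rho> (letter_add p z) (\<rho> y v) x)"
    using p z fAy by (rule rep_nonneg_neg_swap)
  have e5: "\<rho> p (\<rho> y v) = (\<lambda>x. \<rho> y (\<rho> p v) x + letter_C p y * \<rho> (letter_add p y) v x)"
    using p y v by (rule rep_nonneg_neg_swap)
  have e6: "\<rho> z (\<rho> p (\<rho> y v)) = (\<lambda>x. \<rho> z (\<rho> y (\<rho> p v)) x + letter_C p y * \<rho> z (\<rho> (letter_add p y) v) x)"
    unfolding e5 by (intro rep_add_scal) (simp_all add: finite_Supp_rep fAp fApy)
  have e7: "\<rho> p (\<rho> (letter_add y z) v) = (\<lambda>x. \<rho> (letter_add y z) (\<rho> p v) x + letter_C p (letter_add y z) * \<rho> (letter_add p (letter_add y z)) v x)"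
    using p yz v by (rule rep_nonneg_neg_swap)
  show ?thesis
    unfolding e0 e1 e3 e4 e6 e7
    unfolding rep_comm_def l1 l2
    by (rule ext) (simp add: algebra_simps)
qed

lemma rep_rep_comm_neg_neg_J:
  assumes y: "fst y \<le> -1" "snd y \<in> S" and z: "fst z \<le> -1" "snd z \<in> S"
    and p: "snd p \<in> S" and v: "v \<in> T"
  shows "\<rho> p (rep_comm y z v) \<in> J"
proof (cases "fst p \<le> -1")
  case True
  have "rep_comm y z v \<in> J" using y z v by (intro rep_comm_neg_neg_J)
  moreover from this have "\<rho> p (rep_comm y z v) = letter_mult p (rep_comm y z v)"
    using True by (simp add: rep_neg T_finite J_T)
  ultimately show ?thesis using True p by (simp add: J_letter_mult)
next
  case False
  have t1: "rep_comm y z (\<rho> p v) \<in> J" using y z v p by (intro rep_comm_neg_neg_J rep_T)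
  have t2: "(\<lambda>x. letter_C p z * rep_comm y (letter_add p z) v x) \<in> J"
    using y z p v by (intro J_scal_letter_C rep_comm_J) auto
  have t3: "(\<lambda>x. letter_C p y * rep_comm (letter_add p y) z v x) \<in> J"
    using y z p v by (intro J_scal_letter_C rep_comm_J) auto
  have "\<rho> p (rep_comm y z v) = (\<lambda>x. rep_comm y z (\<rho> p v) x + letter_C p z * rep_comm y (letter_add p z) v x
      + letter_C p y * rep_comm (letter_add p y) z v x)"
    using rep_nonneg_rep_comm_neg_neg[OF False y(1) z(1) T_finite[OF v]]
      letter_C_jacobi_derivation[OF p y(2) z(2)] by simp
  then show ?thesis using J_add[OF J_add[OF t1 t2] t3] by simp
qed

definition stable_J :: "('g letter list \<Rightarrow> complex) set" where "stable_J = {f. f \<in> J \<and> (\<forall>l. snd l \<in> S \<longrightarrow> \<rho> l f \<in> J)}"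

lemma stable_J_rep: "f \<in> stable_J \<Longrightarrow> snd l \<in> S \<Longrightarrow> \<rho> l f \<in> J" unfolding stable_J_def by blast

lemma stable_JI: "f \<in> J \<Longrightarrow> (\<And>l. snd l \<in> S \<Longrightarrow> \<rho> l f \<in> J) \<Longrightarrow> f \<in> stable_J" unfolding stable_J_def by blast

lemma stable_J_zero: "(\<lambda>x. 0) \<in> stable_J" by (simp add: stable_J_def J_zero)

lemma stable_J_add: "f \<in> stable_J \<Longrightarrow> g \<in> stable_J \<Longrightarrow> (\<lambda>x. f x + g x) \<in> stable_J"
  unfolding stable_J_def using J_T T_finite by (auto simp: rep_add intro!: J_add)

lemma stable_J_scal: "f \<in> stable_J \<Longrightarrow> (\<lambda>x. c * f x) \<in> stable_J"
  unfolding stable_J_def using J_T T_finite by (auto simp: rep_scal intro!: J_scal)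

lemma stable_J_neg: "f \<in> stable_J \<Longrightarrow> (\<lambda>x. - f x) \<in> stable_J"
  using stable_J_scal[of f "-1"] by simp

lemma stable_J_sum: "finite I \<Longrightarrow> (\<And>i. i \<in> I \<Longrightarrow> h i \<in> stable_J) \<Longrightarrow> (\<lambda>a. \<Sum>i\<in>I. c i * h i a) \<in> stable_J"
proof (induction I rule: finite_induct)
  case empty then show ?case by (simp add: stable_J_zero)
next
  case (insert i I)
  then show ?case by (simp add: stable_J_add stable_J_scal)
qed

lemma stable_J_letter_mult:
  assumes f: "f \<in> stable_J" and y: "fst y \<le> -1" "snd y \<in> S"
  shows "letter_mult y f \<in> stable_J"
proof -
  have fJ: "f \<in> J" using f by (simp add: stable_J_def)
  have fin: "finite (Supp f)" using J_T[OF fJ] by (rule T_finite)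
  have "\<rho> l (letter_mult y f) \<in> J" if l: "snd l \<in> S" for l
  proof (cases "fst l \<le> -1")
    case True
    then have "\<rho> l (letter_mult y f) = letter_mult l (letter_mult y f)" by (simp add: rep_neg finite_Supp_letter_mult fin)
    then show ?thesis using J_letter_mult[OF J_letter_mult[OF fJ y] True l] by simp
  next
    case False
    have t1: "letter_mult y (\<rho> l f) \<in> J" using stable_J_rep[OF f l] y by (rule J_letter_mult)
    have t2: "(\<lambda>x. letter_C l y * \<rho> (letter_add l y) f x) \<in> J"
      using l y by (intro J_scal_letter_C stable_J_rep[OF f])
    show ?thesis using False J_add[OF t1 t2] by (simp add: rep_nonneg_letter_mult letter_C_def)
  qed
  then show ?thesis using J_letter_mult[OF fJ y] by (intro stable_JI)
qed

lemma stable_J_conv_delta: "w \<in> M_minus S \<Longrightarrow> f \<in> stable_J \<Longrightarrow> conv (delta w) f \<in> stable_J"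
proof (induction w)
  case Nil then show ?case by (simp add: conv_delta_Nil_left)
next
  case (Cons y w)
  have y: "fst y \<le> -1" "snd y \<in> S" and w: "w \<in> M_minus S" using Cons.prems by (auto simp: M_minus_Cons)
  have "conv (delta (y # w)) f = conv (conv (delta [y]) (delta w)) f" by (simp only: conv_delta_delta append.simps)
  also have "\<dots> = letter_mult y (conv (delta w) f)" by (subst conv_assoc) (rule conv_delta_single)
  finally show ?case using stable_J_letter_mult[OF Cons.IH[OF w Cons.prems(2)] y] by simp
qed

lemma stable_J_lconv: "h \<in> T \<Longrightarrow> f \<in> stable_J \<Longrightarrow> conv h f \<in> stable_J"
proof -
  assume h: "h \<in> T" and f: "f \<in> stable_J"
  have fin: "finite (Supp h)" using h by (rule T_finite)
  have "conv h f = conv (\<lambda>x. \<Sum>w\<in>Supp h. h w * delta w x) f" using expand_delta[OF fin] by simp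
  also have "\<dots> = (\<lambda>x. \<Sum>w\<in>Supp h. h w * conv (delta w) f x)" using fin by (rule conv_sum_left)
  also have "\<dots> \<in> stable_J"
  proof (rule stable_J_sum[OF fin])
    fix w assume "w \<in> Supp h"
    then have "w \<in> M_minus S" using h by (auto simp: T_iff)
    then show "conv (delta w) f \<in> stable_J" using f by (rule stable_J_conv_delta)
  qed
  finally show ?thesis .
qed

lemma conv_rel_stable_J:
  assumes "\<alpha> \<in> S" "\<beta> \<in> S" "m \<le> -1" "l \<le> -1" "v \<in> T"
  shows "conv (rel C \<alpha> \<beta> m l) v \<in> stable_J"
proof -
  have "conv (rel C \<alpha> \<beta> m l) v = rep_comm (m,\<alpha>) (l,\<beta>) v"
    using assms by (simp add: rep_comm_neg_neg T_finite)
  moreover have "conv (rel C \<alpha> \<beta> m l) v \<in> J" using assms by (intro J_rconv rel_J)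
  ultimately show ?thesis using assms by (auto intro!: stable_JI rep_rep_comm_neg_neg_J)
qed

definition right_stable_J :: "('g letter list \<Rightarrow> complex) set" where "right_stable_J = {f \<in> T. \<forall>v\<in>T. conv f v \<in> stable_J}"

lemma right_stable_J_ideal: "ideal right_stable_J (word_ring T)"
proof (rule ideal_wordI[OF T_ring])
  show "right_stable_J \<subseteq> T" by (auto simp: right_stable_J_def)
  show "(\<lambda>a. 0) \<in> right_stable_J" by (simp add: right_stable_J_def T_zero conv_zero_left stable_J_zero)
  fix f assume f: "f \<in> right_stable_J"
  {
    fix g assume g: "g \<in> right_stable_J"
    show "(\<lambda>a. f a + g a) \<in> right_stable_J" using f g by (auto simp: right_stable_J_def T_add conv_add_left intro!: stable_J_add)
  }
  show "(\<lambda>a. - f a) \<in> right_stable_J"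
  proof -
    have "conv (\<lambda>a. - f a) v = (\<lambda>a. (-1) * conv f v a)" for v
      using conv_scal_left[of "-1" f v] by simp
    then show ?thesis using f by (auto simp: right_stable_J_def T_neg intro!: stable_J_neg)
  qed
  fix h assume h: "h \<in> T"
  show "conv h f \<in> right_stable_J" unfolding right_stable_J_def
  proof (intro CollectI conjI ballI)
    show "conv h f \<in> T" using f h by (simp add: right_stable_J_def T_conv)
    fix v assume v: "v \<in> T"
    have "conv f v \<in> stable_J" using f v by (simp add: right_stable_J_def)
    then have "conv h (conv f v) \<in> stable_J" by (rule stable_J_lconv[OF h])
    then show "conv (conv h f) v \<in> stable_J" by (simp add: conv_assoc)
  qed
  show "conv f h \<in> right_stable_J" using f h by (auto simp: right_stable_J_def T_conv conv_assoc)
qed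

lemma J_right_stable_J: "J \<subseteq> right_stable_J"
proof (rule J_minimal[OF right_stable_J_ideal])
  show "J_generators \<subseteq> right_stable_J"
  proof
    fix g assume "g \<in> J_generators"
    then obtain \<alpha> \<beta> m l where g: "g = rel C \<alpha> \<beta> m l" "\<alpha> \<in> S" "\<beta> \<in> S" "m \<le> -1" "l \<le> -1"
      by (auto simp: J_generators_def)
    then show "g \<in> right_stable_J" by (auto simp: right_stable_J_def rel_T intro!: conv_rel_stable_J)
  qed
qed

lemma rep_J: "f \<in> J \<Longrightarrow> snd l \<in> S \<Longrightarrow> \<rho> l f \<in> J"
proof -
  assume f: "f \<in> J" and l: "snd l \<in> S"
  then have "f \<in> right_stable_J" using J_right_stable_J by blast
  then have "conv f (delta []) \<in> stable_J" by (auto simp: right_stable_J_def T_delta)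
  then show ?thesis using l stable_J_rep by (simp add: conv_delta_Nil_right)
qed

lemma rep_word_J: "f \<in> J \<Longrightarrow> c \<in> lists (UNIV \<times> S) \<Longrightarrow> rep_word C c f \<in> J"
proof (induction c)
  case Nil then show ?case by simp
next
  case (Cons l c)
  then show ?case by (cases l) (auto intro: rep_J)
qed

lemma F_iff: "\<mu> \<in> F \<longleftrightarrow> locally_finite \<mu> \<and> Supp \<mu> \<subseteq> lists (UNIV \<times> S)"
  by (auto simp: F_carrier_def locally_finite_def)

lemma F_add: "\<mu> \<in> F \<Longrightarrow> \<nu> \<in> F \<Longrightarrow> (\<lambda>a. \<mu> a + \<nu> a) \<in> F"
  unfolding F_iff using locally_finite_add Supp_add by blast

lemma F_scal: "\<mu> \<in> F \<Longrightarrow> (\<lambda>a. k * \<mu> a) \<in> F"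
  unfolding F_iff using locally_finite_scal Supp_scal by blast

lemma F_conv: "\<nu> \<in> F \<Longrightarrow> \<mu> \<in> F \<Longrightarrow> conv \<nu> \<mu> \<in> F"
proof -
  assume n: "\<nu> \<in> F" and m: "\<mu> \<in> F"
  have "locally_finite (conv \<nu> \<mu>)" using n m by (simp add: F_iff locally_finite_conv)
  moreover have "Supp (conv \<nu> \<mu>) \<subseteq> lists (UNIV \<times> S)"
  proof
    fix a assume "a \<in> Supp (conv \<nu> \<mu>)"
    then obtain b c where "a = b @ c" "b \<in> Supp \<nu>" "c \<in> Supp \<mu>" using Supp_conv by blast
    then show "a \<in> lists (UNIV \<times> S)" using n m by (auto simp: F_iff)
  qed
  ultimately show ?thesis by (simp add: F_iff)
qed

lemma F_ring_ring: "ring (F_ring S)"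
  unfolding F_ring_def
proof (rule word_ring_ring)
  show "(\<lambda>a. 0) \<in> F" by (simp add: F_iff locally_finite_def)
  show "delta [] \<in> F" by (simp add: F_iff finite_Supp_locally_finite)
  fix f g assume f: "f \<in> F" and g: "g \<in> F"
  show "(\<lambda>a. f a + g a) \<in> F" using f g by (rule F_add)
  show "conv f g \<in> F" using f g by (rule F_conv)
next
  fix f assume f: "f \<in> F"
  show "(\<lambda>a. - f a) \<in> F" using F_scal[of f "-1"] f by simp
qed

lemma rep_word_nonzero_word_le:
  assumes f: "f \<in> T" and c: "c \<in> lists (UNIV \<times> S)" and nz: "rep_word C c f \<noteq> (\<lambda>x. 0)"
  shows "word_le c (weight_bound f)"
  unfolding word_le_weight
proof (intro allI impI)
  fix l assume "l < length c"
  have dc: "drop l c \<in> lists (UNIV \<times> S)" using c by (rule lists_drop)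
  have "rep_word C c f = rep_word C (take l c) (rep_word C (drop l c) f)"
    using rep_word_append[of C "take l c" "drop l c" f] by simp
  then have "rep_word C (drop l c) f \<noteq> (\<lambda>x. 0)" using nz by auto
  then obtain a where a: "a \<in> Supp (rep_word C (drop l c) f)" by (auto simp: Supp_def)
  have "rep_word C (drop l c) f \<in> T" using rep_word_T[OF f dc] .
  then have "a \<in> M_minus S" using a by (auto simp: T_iff)
  then have "weight a \<le> 0" by (rule weight_M_minus)
  moreover obtain w where w: "w \<in> Supp f" "weight a = weight (drop l c) + weight w" using weight_rep_word[OF a] by blast
  moreover have "\<bar>weight w\<bar> \<le> weight_bound f" using weight_le_weight_bound[OF T_finite[OF f] w(1)] .
  ultimately show "weight (drop l c) \<le> weight_bound f" by linarith
qed

lemma finite_rep_F_support: "locally_finite \<mu> \<Longrightarrow> finite (rep_F_support \<mu> f)"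
  by (simp add: locally_finite_def rep_F_support_def)

lemma rep_F_eq:
  assumes \<mu>: "\<mu> \<in> F" and f: "f \<in> T" and W: "finite W"
    and cov: "\<And>c. \<mu> c \<noteq> 0 \<Longrightarrow> rep_word C c f \<noteq> (\<lambda>x. 0) \<Longrightarrow> c \<in> W"
  shows "rep_F C \<mu> f = (\<lambda>x. \<Sum>c\<in>W. \<mu> c * rep_word C c f x)"
proof (rule ext)
  fix x
  have fW: "finite (rep_F_support \<mu> f)" using \<mu> by (simp add: F_iff finite_rep_F_support)
  have z: "\<mu> c * rep_word C c f x = 0" if "c \<notin> rep_F_support \<mu> f \<inter> W" for c
  proof (cases "\<mu> c = 0 \<or> rep_word C c f = (\<lambda>x. 0)")
    case True then show ?thesis by auto
  next
    case False
    then have "c \<in> W" using cov by blast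
    moreover have "c \<in> Supp \<mu>" using False by (simp add: Supp_def)
    moreover have "word_le c (weight_bound f)"
      using rep_word_nonzero_word_le[OF f] False \<mu> \<open>c \<in> Supp \<mu>\<close> by (auto simp: F_iff)
    ultimately have "c \<in> rep_F_support \<mu> f \<inter> W" by (simp add: rep_F_support_def)
    with that show ?thesis by blast
  qed
  have "rep_F C \<mu> f x = (\<Sum>c\<in>rep_F_support \<mu> f. \<mu> c * rep_word C c f x)" by (simp add: rep_F_def)
  also have "\<dots> = (\<Sum>c\<in>rep_F_support \<mu> f \<inter> W. \<mu> c * rep_word C c f x)"
    by (rule sum.mono_neutral_right) (use fW z in auto)
  also have "\<dots> = (\<Sum>c\<in>W. \<mu> c * rep_word C c f x)"
    by (rule sum.mono_neutral_left) (use W z in auto)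
  finally show "rep_F C \<mu> f x = (\<Sum>c\<in>W. \<mu> c * rep_word C c f x)" .
qed

lemma rep_F_T: "\<mu> \<in> F \<Longrightarrow> f \<in> T \<Longrightarrow> rep_F C \<mu> f \<in> T"
  unfolding rep_F_def
  by (rule T_sum) (auto simp: F_iff finite_rep_F_support rep_F_support_def locally_finite_def intro!: rep_word_T)

lemma rep_F_J: "\<mu> \<in> F \<Longrightarrow> f \<in> J \<Longrightarrow> rep_F C \<mu> f \<in> J"
  unfolding rep_F_def
  by (rule J_sum) (auto simp: F_iff finite_rep_F_support rep_F_support_def locally_finite_def intro!: rep_word_J)

lemma rep_F_zero: "rep_F C (\<lambda>a. 0) f = (\<lambda>x. 0)"
  by (simp add: rep_F_def rep_F_support_def)

lemma rep_F_add:
  assumes \<mu>: "\<mu> \<in> F" and \<nu>: "\<nu> \<in> F" and f: "f \<in> T"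
  shows "rep_F C (\<lambda>a. \<mu> a + \<nu> a) f = (\<lambda>x. rep_F C \<mu> f x + rep_F C \<nu> f x)"
proof -
  let ?W = "rep_F_support \<mu> f \<union> rep_F_support \<nu> f"
  have W: "finite ?W" using \<mu> \<nu> by (simp add: F_iff finite_rep_F_support)
  have cv: "c \<in> ?W" if "\<rho> c \<noteq> 0" "rep_word C c f \<noteq> (\<lambda>x. 0)" "\<rho> = \<mu> \<or> \<rho> = \<nu>" for \<rho> c
  proof -
    have "c \<in> Supp \<rho>" using that by (simp add: Supp_def)
    moreover have "c \<in> lists (UNIV \<times> S)" using that \<open>c \<in> Supp \<rho>\<close> \<mu> \<nu> by (auto simp: F_iff)
    ultimately show ?thesis using rep_word_nonzero_word_le[OF f _ that(2)] that(3) by (auto simp: rep_F_support_def)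
  qed
  have e1: "rep_F C \<mu> f = (\<lambda>x. \<Sum>c\<in>?W. \<mu> c * rep_word C c f x)" using cv by (intro rep_F_eq[OF \<mu> f W]) auto
  have e2: "rep_F C \<nu> f = (\<lambda>x. \<Sum>c\<in>?W. \<nu> c * rep_word C c f x)" using cv by (intro rep_F_eq[OF \<nu> f W]) auto
  have e3: "rep_F C (\<lambda>a. \<mu> a + \<nu> a) f = (\<lambda>x. \<Sum>c\<in>?W. (\<mu> c + \<nu> c) * rep_word C c f x)"
  proof (rule rep_F_eq[OF F_add[OF \<mu> \<nu>] f W])
    fix c assume "\<mu> c + \<nu> c \<noteq> 0" "rep_word C c f \<noteq> (\<lambda>x. 0)"
    then show "c \<in> ?W" using cv[of \<mu> c] cv[of \<nu> c] by (cases "\<mu> c = 0") auto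
  qed
  show ?thesis unfolding e1 e2 e3 by (simp add: distrib_right sum.distrib)
qed

lemma rep_F_scal:
  assumes \<mu>: "\<mu> \<in> F" and f: "f \<in> T"
  shows "rep_F C (\<lambda>a. k * \<mu> a) f = (\<lambda>x. k * rep_F C \<mu> f x)"
proof -
  let ?W = "rep_F_support \<mu> f"
  have W: "finite ?W" using \<mu> by (simp add: F_iff finite_rep_F_support)
  have cv: "c \<in> ?W" if "\<mu> c \<noteq> 0" "rep_word C c f \<noteq> (\<lambda>x. 0)" for c
  proof -
    have "c \<in> Supp \<mu>" using that by (simp add: Supp_def)
    moreover have "c \<in> lists (UNIV \<times> S)" using \<open>c \<in> Supp \<mu>\<close> \<mu> by (auto simp: F_iff)
    ultimately show ?thesis using rep_word_nonzero_word_le[OF f _ that(2)] by (auto simp: rep_F_support_def)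
  qed
  have e3: "rep_F C (\<lambda>a. k * \<mu> a) f = (\<lambda>x. \<Sum>c\<in>?W. (k * \<mu> c) * rep_word C c f x)"
    by (rule rep_F_eq[OF F_scal[OF \<mu>] f W]) (use cv in auto)
  have e4: "rep_F C \<mu> f = (\<lambda>x. \<Sum>c\<in>?W. \<mu> c * rep_word C c f x)" by (simp add: rep_F_def)
  show ?thesis by (simp only: e3 e4) (simp add: sum_distrib_left mult.assoc)
qed

lemma rep_F_diff_scal:
  assumes P: "P \<in> F" and Q: "Q \<in> F" and R: "R \<in> F" and f: "f \<in> T"
  shows "rep_F C (\<lambda>a. P a - Q a - c * R a) f = (\<lambda>x. rep_F C P f x - rep_F C Q f x - c * rep_F C R f x)"
proof -
  have i1: "(\<lambda>a. P a + (-1) * Q a) \<in> F" by (rule F_add[OF P F_scal[OF Q]])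
  have i2: "(\<lambda>a. (-c) * R a) \<in> F" by (rule F_scal[OF R])
  have e: "(\<lambda>a. P a - Q a - c * R a) = (\<lambda>a. (P a + (-1) * Q a) + (-c) * R a)" by (rule ext) simp
  have a1: "rep_F C (\<lambda>a. (P a + (-1) * Q a) + (-c) * R a) f
      = (\<lambda>x. rep_F C (\<lambda>a. P a + (-1) * Q a) f x + rep_F C (\<lambda>a. (-c) * R a) f x)"
    by (rule rep_F_add[OF i1 i2 f])
  have a2: "rep_F C (\<lambda>a. P a + (-1) * Q a) f = (\<lambda>x. rep_F C P f x + rep_F C (\<lambda>a. (-1) * Q a) f x)"
    by (rule rep_F_add[OF P F_scal[OF Q] f])
  have a3: "rep_F C (\<lambda>a. (-1) * Q a) f = (\<lambda>x. (-1) * rep_F C Q f x)" by (rule rep_F_scal[OF Q f])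
  have a4: "rep_F C (\<lambda>a. (-c) * R a) f = (\<lambda>x. (-c) * rep_F C R f x)" by (rule rep_F_scal[OF R f])
  show ?thesis unfolding e a1 a2 a3 a4 by (rule ext) simp
qed

lemma rep_F_Xw:
  assumes "\<alpha> \<in> S" "f \<in> T"
  shows "rep_F C (Xw \<alpha> m) f = \<rho> (m, \<alpha>) f"
proof -
  have i: "Xw \<alpha> m \<in> F" using assms by (auto simp: F_iff Xw_eq_delta intro: finite_Supp_locally_finite)
  have "rep_F C (Xw \<alpha> m) f = (\<lambda>x. \<Sum>c\<in>{[(m,\<alpha>)]}. Xw \<alpha> m c * rep_word C c f x)"
    by (rule rep_F_eq[OF i assms(2)]) (auto simp: Xw_def split: if_splits)
  then show ?thesis by (simp add: Xw_def)
qed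

lemma rep_F_conv:
  assumes n: "\<nu> \<in> F" and m: "\<mu> \<in> F" and f: "f \<in> T"
  shows "rep_F C (conv \<nu> \<mu>) f = rep_F C \<nu> (rep_F C \<mu> f)"
proof -
  define W\<mu> where "W\<mu> = rep_F_support \<mu> f"
  define W\<nu> where "W\<nu> = {b \<in> Supp \<nu>. word_le b (weight_bound f + (\<Sum>c\<in>W\<mu>. \<bar>weight c\<bar>))}"
  have fWm: "finite W\<mu>" using m by (simp add: W\<mu>_def F_iff finite_rep_F_support)
  have fWn: "finite W\<nu>" using n by (simp add: W\<nu>_def F_iff locally_finite_def)
  have key: "b \<in> W\<nu> \<and> c \<in> W\<mu>"
    if b: "b \<in> Supp \<nu>" and c: "c \<in> Supp \<mu>" and nz: "rep_word C (b @ c) f \<noteq> (\<lambda>x. 0)" for b c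
  proof -
    have "b @ c \<in> lists (UNIV \<times> S)" using b c n m by (auto simp: F_iff)
    note wl = word_le_append[OF rep_word_nonzero_word_le[OF f this nz]]
    then have cW: "c \<in> W\<mu>" using c by (simp add: W\<mu>_def rep_F_support_def)
    then have "\<bar>weight c\<bar> \<le> (\<Sum>c\<in>W\<mu>. \<bar>weight c\<bar>)" using fWm by (intro member_le_sum) auto
    then show ?thesis using b cW wl(2) word_le_mono by (fastforce simp: W\<nu>_def)
  qed
  have Abm: "rep_word C b (rep_F C \<mu> f) = (\<lambda>x. \<Sum>c\<in>W\<mu>. \<mu> c * rep_word C (b @ c) f x)" for b
    using fWm finite_Supp_rep_word[OF T_finite[OF f]]
    by (simp add: rep_F_def W\<mu>_def rep_word_sum rep_word_append)
  have e2: "rep_F C \<nu> (rep_F C \<mu> f) = (\<lambda>x. \<Sum>b\<in>W\<nu>. \<nu> b * rep_word C b (rep_F C \<mu> f) x)"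
  proof (rule rep_F_eq[OF n rep_F_T[OF m f] fWn])
    fix b assume nb: "\<nu> b \<noteq> 0" and nz: "rep_word C b (rep_F C \<mu> f) \<noteq> (\<lambda>x. 0)"
    then obtain x where "(\<Sum>c\<in>W\<mu>. \<mu> c * rep_word C (b @ c) f x) \<noteq> 0" unfolding Abm by auto
    from sum.not_neutral_contains_not_neutral[OF this] obtain c
      where "c \<in> W\<mu>" "\<mu> c * rep_word C (b @ c) f x \<noteq> 0" by blast
    then show "b \<in> W\<nu>" using key nb by (fastforce simp: W\<mu>_def rep_F_support_def Supp_def)
  qed
  define W where "W = (\<lambda>(b,c). b @ c) ` (W\<nu> \<times> W\<mu>)"
  have fW: "finite W" using fWn fWm by (simp add: W_def)
  have e1: "rep_F C (conv \<nu> \<mu>) f = (\<lambda>x. \<Sum>a\<in>W. conv \<nu> \<mu> a * rep_word C a f x)"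
  proof (rule rep_F_eq[OF F_conv[OF n m] f fW])
    fix a assume "conv \<nu> \<mu> a \<noteq> 0" "rep_word C a f \<noteq> (\<lambda>x. 0)"
    then show "a \<in> W" using Supp_conv[of a \<nu> \<mu>] key by (fastforce simp: Supp_def W_def)
  qed
  have "(\<Sum>a\<in>W. conv \<nu> \<mu> a * rep_word C a f x)
      = (\<Sum>b\<in>W\<nu>. \<Sum>c\<in>W\<mu>. \<nu> b * \<mu> c * rep_word C (b @ c) f x)" for x
    using key by (intro sum_conv_mult fW fWn fWm) (auto simp: W_def Supp_def fun_eq_iff)
  then show ?thesis
    unfolding e1 e2 Abm by (simp add: sum_distrib_left mult.assoc)
qed

lemma rep_word_delta_Nil: "c \<in> M_minus S \<Longrightarrow> rep_word C c (delta []) = delta c"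
proof (induction c)
  case Nil then show ?case by simp
next
  case (Cons l c)
  then have "fst l \<le> -1" "c \<in> M_minus S" by (auto simp: M_minus_Cons)
  then show ?case using Cons by (simp add: rep_neg letter_mult_delta)
qed

definition F_to_J :: "('g letter list \<Rightarrow> complex) set" where "F_to_J = {\<mu> \<in> F. \<forall>f\<in>T. rep_F C \<mu> f \<in> J}"

lemma F_to_J_ideal: "ideal F_to_J (F_ring S)"
  unfolding F_ring_def
proof (rule ideal_wordI[OF F_ring_ring[unfolded F_ring_def]])
  show "F_to_J \<subseteq> F" by (auto simp: F_to_J_def)
  show "(\<lambda>a. 0) \<in> F_to_J" by (simp add: F_to_J_def rep_F_zero J_zero F_iff locally_finite_def)
  fix \<mu> assume m: "\<mu> \<in> F_to_J"
  then have mF: "\<mu> \<in> F" and mJ: "\<And>f. f \<in> T \<Longrightarrow> rep_F C \<mu> f \<in> J" by (auto simp: F_to_J_def)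
  {
    fix \<nu> assume "\<nu> \<in> F_to_J"
    then have nF: "\<nu> \<in> F" and nJ: "\<And>f. f \<in> T \<Longrightarrow> rep_F C \<nu> f \<in> J" by (auto simp: F_to_J_def)
    show "(\<lambda>a. \<mu> a + \<nu> a) \<in> F_to_J"
      using mF nF mJ nJ by (auto simp: F_to_J_def F_add rep_F_add intro!: J_add)
  }
  show "(\<lambda>a. - \<mu> a) \<in> F_to_J"
  proof -
    have i: "(\<lambda>a. - \<mu> a) \<in> F" using F_scal[OF mF, of "-1"] by simp
    have "rep_F C (\<lambda>a. - \<mu> a) f = (\<lambda>x. - rep_F C \<mu> f x)" if "f \<in> T" for f
      using rep_F_scal[OF mF that, of "-1"] by simp
    then show ?thesis using i mJ by (auto simp: F_to_J_def intro!: J_neg)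
  qed
  fix h assume hF: "h \<in> F"
  have "rep_F C (conv h \<mu>) f \<in> J" if f: "f \<in> T" for f
    using rep_F_conv[OF hF mF f] rep_F_J[OF hF mJ[OF f]] by simp
  then show "conv h \<mu> \<in> F_to_J" using F_conv[OF hF mF] by (simp add: F_to_J_def)
  have "rep_F C (conv \<mu> h) f \<in> J" if f: "f \<in> T" for f
    using rep_F_conv[OF mF hF f] mJ[OF rep_F_T[OF hF f]] by simp
  then show "conv \<mu> h \<in> F_to_J" using F_conv[OF mF hF] by (simp add: F_to_J_def)
qed

lemma rel_F_rep_F:
  assumes s: "\<alpha> \<in> S" "\<beta> \<in> S" and f: "f \<in> T"
  shows "rel C \<alpha> \<beta> m l \<in> F \<and> rep_F C (rel C \<alpha> \<beta> m l) f = rep_comm (m,\<alpha>) (l,\<beta>) f"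
proof -
  define R where "R = (if C \<alpha> \<beta> = 0 then (\<lambda>a. 0) else Xw (radd \<alpha> \<beta>) (m + l))"
  have XF: "Xw \<gamma> k \<in> F" if "\<gamma> \<in> S" for \<gamma> k
    using that by (auto simp: F_iff Xw_eq_delta intro: finite_Supp_locally_finite)
  have RF: "R \<in> F"
    using XF C_closed s by (auto simp: R_def F_iff locally_finite_def)
  have RA: "rep_F C R f = (\<lambda>x. (if C \<alpha> \<beta> = 0 then 0 else \<rho> (m + l, radd \<alpha> \<beta>) f x))"
    using rep_F_Xw[of "radd \<alpha> \<beta>" f "m+l"] C_closed s f by (auto simp: R_def rep_F_zero)
  have P: "conv (Xw \<alpha> m) (Xw \<beta> l) \<in> F" and Q: "conv (Xw \<beta> l) (Xw \<alpha> m) \<in> F"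
    using XF s by (auto intro: F_conv)
  have e: "rel C \<alpha> \<beta> m l = (\<lambda>a. conv (Xw \<alpha> m) (Xw \<beta> l) a - conv (Xw \<beta> l) (Xw \<alpha> m) a
       - C \<alpha> \<beta> * R a)"
    by (auto simp: rel_def R_def)
  have "rel C \<alpha> \<beta> m l \<in> F" unfolding e using F_add[OF F_add[OF P F_scal[OF Q, of "-1"]] F_scal[OF RF, of "- C \<alpha> \<beta>"]]
    by simp
  moreover have "rep_F C (rel C \<alpha> \<beta> m l) f = rep_comm (m,\<alpha>) (l,\<beta>) f"
  proof -
    have aT2: "\<rho> (l,\<beta>) f \<in> T" by (rule rep_T[OF f]) (simp add: s)
    have aT1: "\<rho> (m,\<alpha>) f \<in> T" by (rule rep_T[OF f]) (simp add: s)
    have c1: "rep_F C (conv (Xw \<alpha> m) (Xw \<beta> l)) f = \<rho> (m,\<alpha>) (\<rho> (l,\<beta>) f)"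
      using rep_F_conv[OF XF[OF s(1)] XF[OF s(2)] f] rep_F_Xw[OF s(2) f] rep_F_Xw[OF s(1) aT2] by simp
    have c2: "rep_F C (conv (Xw \<beta> l) (Xw \<alpha> m)) f = \<rho> (l,\<beta>) (\<rho> (m,\<alpha>) f)"
      using rep_F_conv[OF XF[OF s(2)] XF[OF s(1)] f] rep_F_Xw[OF s(1) f] rep_F_Xw[OF s(2) aT1] by simp
    show ?thesis unfolding e rep_F_diff_scal[OF P Q RF f] c1 c2 RA rep_comm_def
      by (rule ext) (simp add: letter_C_def letter_add_def)
  qed
  ultimately show ?thesis by simp
qed

definition I_generators :: "('g letter list \<Rightarrow> complex) set" where "I_generators = {rel C \<alpha> \<beta> m l | \<alpha> \<beta> m l. \<alpha> \<in> S \<and> \<beta> \<in> S}"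

lemma I_tilde_eq_genideal: "I_tilde S C = genideal (F_ring S) I_generators"
  by (simp add: I_tilde_def I_generators_def)

lemma I_generators_F: "I_generators \<subseteq> F"
  using rel_F_rep_F[OF _ _ T_zero] by (auto simp: I_generators_def F_iff)

lemma I_ideal: "ideal (I_tilde S C) (F_ring S)"
proof -
  interpret R: ring "F_ring S" by (rule F_ring_ring)
  show ?thesis unfolding I_tilde_eq_genideal by (rule R.genideal_ideal) (use I_generators_F in \<open>simp add: F_ring_def word_ring_def\<close>)
qed

lemma I_tilde_F_to_J: "I_tilde S C \<subseteq> F_to_J"
proof -
  interpret R: ring "F_ring S" by (rule F_ring_ring)
  show ?thesis unfolding I_tilde_eq_genideal
  proof (rule R.genideal_minimal[OF F_to_J_ideal])
    show "I_generators \<subseteq> F_to_J"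
    proof
      fix g assume "g \<in> I_generators"
      then obtain \<alpha> \<beta> m l where g: "g = rel C \<alpha> \<beta> m l" "\<alpha> \<in> S" "\<beta> \<in> S" by (auto simp: I_generators_def)
      have "g \<in> F" using rel_F_rep_F[OF g(2,3) T_zero] g by (simp add: F_iff)
      moreover have "rep_F C g f \<in> J" if "f \<in> T" for f
        using rel_F_rep_F[OF g(2,3) that] g rep_comm_J[OF that] by simp
      ultimately show "g \<in> F_to_J" by (simp add: F_to_J_def)
    qed
  qed
qed

lemma rep_F_delta_Nil:
  assumes "\<mu> \<in> T" shows "rep_F C \<mu> (delta []) = \<mu>"
proof -
  have "rep_F_support \<mu> (delta []) = Supp \<mu>"
    using assms M_minus_word_le by (auto simp: rep_F_support_def weight_bound_def T_iff)
  then have "rep_F C \<mu> (delta []) = (\<lambda>x. \<Sum>c\<in>Supp \<mu>. \<mu> c * delta c x)"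
    unfolding rep_F_def using assms rep_word_delta_Nil by (intro ext sum.cong) (auto simp: T_iff)
  also have "\<dots> = \<mu>" using expand_delta[OF T_finite[OF assms]] by simp
  finally show ?thesis .
qed

lemma I_tilde_T_imp_J: "\<mu> \<in> I_tilde S C \<Longrightarrow> \<mu> \<in> T \<Longrightarrow> \<mu> \<in> J"
  using I_tilde_F_to_J T_delta[of "[]"] rep_F_delta_Nil by (force simp: F_to_J_def)

lemma T_subset_F: "T \<subseteq> F"
proof
  have MM: "M_minus S \<subseteq> lists (UNIV \<times> S)" unfolding M_minus_def by (rule lists_mono) auto
  fix x assume x: "x \<in> T"
  have "Supp x \<subseteq> M_minus S" using x by (simp add: T_iff)
  then have "Supp x \<subseteq> lists (UNIV \<times> S)" using MM by (rule order_trans)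
  then show "x \<in> F" using finite_Supp_locally_finite[OF T_finite[OF x]] by (simp add: F_iff)
qed

lemma F_M_minus_T: "\<mu> \<in> F \<Longrightarrow> Supp \<mu> \<subseteq> M_minus S \<Longrightarrow> \<mu> \<in> T"
proof -
  assume m: "\<mu> \<in> F" and s: "Supp \<mu> \<subseteq> M_minus S"
  have "Supp \<mu> = {a \<in> Supp \<mu>. word_le a 0}" using s M_minus_word_le by blast
  moreover have "finite {a \<in> Supp \<mu>. word_le a 0}" using m by (simp add: F_iff locally_finite_def)
  ultimately show ?thesis using s by (simp add: T_iff)
qed

lemma T_eq: "T = {\<mu> \<in> F. Supp \<mu> \<subseteq> M_minus S}"
  using T_subset_F F_M_minus_T by (auto simp: T_iff)

abbreviation coset :: "('g letter list \<Rightarrow> complex) \<Rightarrow> ('g letter list \<Rightarrow> complex) set" where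
  "coset \<equiv> a_r_coset (F_ring S) (I_tilde S C)"

lemma ring_hom_ring_coset: "ring_hom_ring (word_ring T) (U_tilde S C) coset"
proof (rule ring_hom_ringI2[OF T_ring])
  interpret I: ideal "I_tilde S C" "F_ring S" by (rule I_ideal)
  show "ring (U_tilde S C)" unfolding U_tilde_def by (rule I.quotient_is_ring)
  show "coset \<in> ring_hom (word_ring T) (U_tilde S C)"
    using ring_hom_word_ring_mono[OF T_subset_F] I.rcos_ring_hom by (simp add: U_tilde_def F_ring_def)
qed

lemma kernel_coset: "a_kernel (word_ring T) (U_tilde S C) coset = J"
proof -
  interpret I: ideal "I_tilde S C" "F_ring S" by (rule I_ideal)
  interpret h: ring_hom_ring "word_ring T" "U_tilde S C" coset by (rule ring_hom_ring_coset)
  have ker: "a_kernel (word_ring T) (U_tilde S C) coset = T \<inter> I_tilde S C"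
    using T_subset_F I.rcos_const_imp_mem I.a_rcos_const
    by (auto simp: a_kernel_def' U_tilde_def FactRing_def word_ring_def F_ring_def)
  have "J \<subseteq> T \<inter> I_tilde S C"
    unfolding ker[symmetric] J_eq_genideal
  proof (rule ring.genideal_minimal[OF T_ring h.kernel_is_ideal])
    have "I_generators \<subseteq> I_tilde S C"
      unfolding I_tilde_eq_genideal by (rule ring.genideal_self[OF F_ring_ring]) (use I_generators_F in \<open>simp add: F_ring_def word_ring_def\<close>)
    moreover have "J_generators \<subseteq> I_generators" unfolding J_generators_def I_generators_def by blast
    ultimately show "J_generators \<subseteq> a_kernel (word_ring T) (U_tilde S C) coset"
      unfolding ker using J_generators_T by blast
  qed
  then show ?thesis using I_tilde_T_imp_J ker by auto
qed

lemma U_tilde_minus_eq: "U_tilde_minus S C = (U_tilde S C)\<lparr>carrier := coset ` T\<rparr>"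
proof -
  have "{coset \<mu> | \<mu>. \<mu> \<in> F \<and> Supp \<mu> \<subseteq> M_minus S} = coset ` T"
    by (auto simp: T_eq)
  then show ?thesis by (simp add: U_tilde_minus_def)
qed

theorem U_minus_iso:
  "\<exists>\<phi>. \<phi> \<in> ring_iso (U_minus S C) (U_tilde_minus S C)
      \<and> (\<forall>c. \<phi> (J +>\<^bsub>word_ring T\<^esub> constw c) = I_tilde S C +>\<^bsub>F_ring S\<^esub> constw c)"
proof -
  interpret h: ring_hom_ring "word_ring T" "U_tilde S C" coset by (rule ring_hom_ring_coset)
  show ?thesis
    using h.FactRing_iso_set_aux constw_T h.the_elem_simp
    by (intro exI[of _ "\<lambda>X. the_elem (coset ` X)"])
       (simp add: U_minus_def U_tilde_minus_eq kernel_coset)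
qed

end

section \<open>Structure constants of a Lie algebra\<close>
context
  fixes sc :: "complex \<Rightarrow> 'g::ab_group_add \<Rightarrow> 'g" and br :: "'g \<Rightarrow> 'g \<Rightarrow> 'g"
  assumes lie: "lie_algebra sc br"
begin

interpretation V: vector_space sc
  using lie by (simp add: lie_algebra_def)

lemma lie_bracket_scale_left: "br (sc c u) v = sc c (br u v)"
proof -
  have "br (sc c u + sc 0 u) v = sc c (br u v) + sc 0 (br u v)"
    using lie unfolding lie_algebra_def by blast
  then show ?thesis by simp
qed

lemma lie_bracket_scale_right: "br u (sc c v) = sc c (br u v)"
proof -
  have "br u (sc c v + sc 0 v) = sc c (br u v) + sc 0 (br u v)"
    using lie unfolding lie_algebra_def by blast
  then show ?thesis by simp
qed

lemma lie_bracket_add_left: "br (u + v) w = br u w + br v w"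
proof -
  have "br (sc 1 u + sc 1 v) w = sc 1 (br u w) + sc 1 (br v w)"
    using lie unfolding lie_algebra_def by blast
  then show ?thesis by simp
qed

lemma lie_bracket_add_right: "br w (u + v) = br w u + br w v"
proof -
  have "br w (sc 1 u + sc 1 v) = sc 1 (br w u) + sc 1 (br w v)"
    using lie unfolding lie_algebra_def by blast
  then show ?thesis by simp
qed

lemma lie_bracket_antisym: "br u v = - br v u"
proof -
  have "br (u + v) (u + v) = 0" "br u u = 0" "br v v = 0"
    using lie by (simp_all add: lie_algebra_def)
  then have "br u v + br v u = 0"
    by (simp add: lie_bracket_add_left lie_bracket_add_right algebra_simps)
  then show ?thesis by (simp add: eq_neg_iff_add_eq_0)
qed

lemma lie_bracket_jacobi: "br (br x y) z = br (br x z) y + br x (br y z)"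
proof -
  have "br x (br y z) + br y (br z x) + br z (br x y) = 0"
    using lie by (simp add: lie_algebra_def)
  moreover have "br y (br z x) = br (br x z) y"
    using lie_bracket_antisym lie_bracket_scale_left[of "-1"] by (metis V.scale_minus_left V.scale_one)
  moreover have "br z (br x y) = - br (br x y) z" by (rule lie_bracket_antisym)
  ultimately show ?thesis by (simp add: algebra_simps eq_neg_iff_add_eq_0)
qed

end


lemma radd_pos_roots:
  assumes "\<alpha> \<in> pos_roots sc br H Bs" "\<beta> \<in> pos_roots sc br H Bs" "radd \<alpha> \<beta> \<in> roots sc br H"
  shows "radd \<alpha> \<beta> \<in> pos_roots sc br H Bs"
proof -
  obtain k1 where k1: "\<alpha> = (\<lambda>x. \<Sum>\<pi>\<in>Bs. of_nat (k1 \<pi>) * \<pi> x)" using assms(1) by (auto simp: pos_roots_def)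
  obtain k2 where k2: "\<beta> = (\<lambda>x. \<Sum>\<pi>\<in>Bs. of_nat (k2 \<pi>) * \<pi> x)" using assms(2) by (auto simp: pos_roots_def)
  have "radd \<alpha> \<beta> = (\<lambda>x. \<Sum>\<pi>\<in>Bs. of_nat (k1 \<pi> + k2 \<pi>) * \<pi> x)"
    unfolding radd_def k1 k2 by (simp add: distrib_right sum.distrib)
  with assms(3) show ?thesis
    unfolding pos_roots_def by (intro CollectI conjI exI[of _ "\<lambda>\<pi>. k1 \<pi> + k2 \<pi>"]) simp_all
qed

locale root_vectors =
  fixes sc :: "complex \<Rightarrow> 'g::ab_group_add \<Rightarrow> 'g" and br :: "'g \<Rightarrow> 'g \<Rightarrow> 'g" and H :: "'g set"
    and Bs :: "('g \<Rightarrow> complex) set" and x :: "('g \<Rightarrow> complex) \<Rightarrow> 'g"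
    and C :: "('g \<Rightarrow> complex) \<Rightarrow> ('g \<Rightarrow> complex) \<Rightarrow> complex"
  assumes lie: "lie_algebra sc br"
    and rootvec: "\<forall>\<alpha>\<in>roots sc br H. x \<alpha> \<in> root_space sc br H \<alpha> \<and> x \<alpha> \<noteq> 0"
    and structconst: "\<forall>\<alpha>\<in>pos_roots sc br H Bs. \<forall>\<beta>\<in>pos_roots sc br H Bs.
           br (x \<alpha>) (x \<beta>) = sc (C \<alpha> \<beta>) (x (radd \<alpha> \<beta>))
           \<and> (radd \<alpha> \<beta> \<notin> roots sc br H \<longrightarrow> C \<alpha> \<beta> = 0)"
begin

abbreviation P where "P \<equiv> pos_roots sc br H Bs"

sublocale V: vector_space sc
  using lie by (simp add: lie_algebra_def)

lemma bracket_root_vectors: "\<alpha> \<in> P \<Longrightarrow> \<beta> \<in> P \<Longrightarrow> br (x \<alpha>) (x \<beta>) = sc (C \<alpha> \<beta>) (x (radd \<alpha> \<beta>))"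
  using structconst by blast

lemma C_eq_0: "\<alpha> \<in> P \<Longrightarrow> \<beta> \<in> P \<Longrightarrow> radd \<alpha> \<beta> \<notin> roots sc br H \<Longrightarrow> C \<alpha> \<beta> = 0"
  using structconst by blast

lemma radd_pos_roots_if_C: "\<alpha> \<in> P \<Longrightarrow> \<beta> \<in> P \<Longrightarrow> C \<alpha> \<beta> \<noteq> 0 \<Longrightarrow> radd \<alpha> \<beta> \<in> P"
  using C_eq_0 radd_pos_roots by blast

lemma scale_root_vector_eq_0:
  assumes "sc c (x \<gamma>) = 0" "\<gamma> \<in> roots sc br H"
  shows "c = 0"
  using assms rootvec V.scale_eq_0_iff by blast

lemma bracket_scaled_root_vector_left:
  assumes "\<alpha> \<in> P" "\<beta> \<in> P" "\<gamma> \<in> P"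
  shows "br (sc (C \<alpha> \<beta>) (x (radd \<alpha> \<beta>))) (x \<gamma>)
       = sc (C \<alpha> \<beta> * C (radd \<alpha> \<beta>) \<gamma>) (x (radd (radd \<alpha> \<beta>) \<gamma>))"
proof (cases "C \<alpha> \<beta> = 0")
  case True then show ?thesis
    using lie_bracket_scale_left[OF lie, of 0] V.scale_zero_left by simp
next
  case False
  then have "radd \<alpha> \<beta> \<in> P" using radd_pos_roots_if_C assms by blast
  then show ?thesis using assms
    by (simp add: lie_bracket_scale_left[OF lie] bracket_root_vectors V.scale_scale)
qed

lemma bracket_scaled_root_vector_right:
  assumes "\<alpha> \<in> P" "\<beta> \<in> P" "\<gamma> \<in> P"
  shows "br (x \<gamma>) (sc (C \<alpha> \<beta>) (x (radd \<alpha> \<beta>)))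
       = sc (C \<alpha> \<beta> * C \<gamma> (radd \<alpha> \<beta>)) (x (radd \<gamma> (radd \<alpha> \<beta>)))"
proof (cases "C \<alpha> \<beta> = 0")
  case True then show ?thesis
    using lie_bracket_scale_right[OF lie, of _ 0] V.scale_zero_left by simp
next
  case False
  then have "radd \<alpha> \<beta> \<in> P" using radd_pos_roots_if_C assms by blast
  then show ?thesis using assms
    by (simp add: lie_bracket_scale_right[OF lie] bracket_root_vectors V.scale_scale)
qed

lemma C_antisym_pos_roots:
  assumes "\<alpha> \<in> P" "\<beta> \<in> P"
  shows "C \<alpha> \<beta> = - C \<beta> \<alpha>"
proof (cases "radd \<alpha> \<beta> \<in> roots sc br H")
  case True
  have "sc (C \<alpha> \<beta>) (x (radd \<alpha> \<beta>)) = - sc (C \<beta> \<alpha>) (x (radd \<alpha> \<beta>))"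
    using bracket_root_vectors[OF assms] bracket_root_vectors[OF assms(2,1)]
      lie_bracket_antisym[OF lie, of "x \<alpha>" "x \<beta>"]
    by (simp add: radd_comm)
  then have "sc (C \<alpha> \<beta> + C \<beta> \<alpha>) (x (radd \<alpha> \<beta>)) = 0"
    by (simp add: V.scale_left_distrib)
  then show ?thesis using scale_root_vector_eq_0 True by (simp add: eq_neg_iff_add_eq_0)
next
  case False
  then show ?thesis using C_eq_0 assms by (simp add: radd_comm)
qed

lemma C_mult_C_eq_0:
  assumes "\<alpha> \<in> P" "\<beta> \<in> P" "\<gamma> \<in> P" "radd \<gamma> (radd \<alpha> \<beta>) \<notin> roots sc br H"
  shows "C \<alpha> \<beta> * C \<gamma> (radd \<alpha> \<beta>) = 0" "C \<alpha> \<beta> * C (radd \<alpha> \<beta>) \<gamma> = 0"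
proof -
  have "radd (radd \<alpha> \<beta>) \<gamma> \<notin> roots sc br H" using assms(4) by (simp add: radd_comm)
  then show "C \<alpha> \<beta> * C \<gamma> (radd \<alpha> \<beta>) = 0" "C \<alpha> \<beta> * C (radd \<alpha> \<beta>) \<gamma> = 0"
    using assms radd_pos_roots_if_C[OF assms(1,2)] C_eq_0 by auto
qed

lemma C_jacobi_pos_roots:
  assumes a: "a \<in> P" and b: "b \<in> P" and y: "y \<in> P"
  shows "C a b * C (radd a b) y = C a y * C (radd a y) b + C b y * C a (radd b y)"
proof -
  define s where "s = radd (radd a b) y"
  have s_eq: "radd (radd a b) y = s" "radd (radd a y) b = s" "radd a (radd b y) = s"
    "radd y (radd a b) = s" "radd b (radd a y) = s"
    unfolding s_def by (simp_all add: radd_def algebra_simps)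
  have "br (br (x a) (x b)) (x y) = br (br (x a) (x y)) (x b) + br (x a) (br (x b) (x y))"
    by (rule lie_bracket_jacobi[OF lie])
  then have "sc (C a b * C (radd a b) y) (x s)
      = sc (C a y * C (radd a y) b) (x s) + sc (C b y * C a (radd b y)) (x s)"
    using assms s_eq
    by (simp add: bracket_root_vectors bracket_scaled_root_vector_left bracket_scaled_root_vector_right)
  then have diff: "sc (C a b * C (radd a b) y - (C a y * C (radd a y) b + C b y * C a (radd b y))) (x s) = 0"
    by (simp add: V.scale_left_diff_distrib V.scale_left_distrib)
  show ?thesis
  proof (cases "s \<in> roots sc br H")
    case True
    with scale_root_vector_eq_0[OF diff] show ?thesis by simp
  next
    case False
    have z: "C a b * C (radd a b) y = 0" "C a y * C (radd a y) b = 0" "C b y * C a (radd b y) = 0"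
      using C_mult_C_eq_0(2)[OF a b y] C_mult_C_eq_0(2)[OF a y b] C_mult_C_eq_0(1)[OF b y a] s_eq False
      by simp_all
    show ?thesis by (simp only: z) simp
  qed
qed

lemma root_data:
  assumes "S \<subseteq> P" and "\<forall>\<alpha>\<in>S. \<forall>\<beta>\<in>S. radd \<alpha> \<beta> \<in> P \<longrightarrow> radd \<alpha> \<beta> \<in> S"
  shows "root_data S C"
proof
  fix \<alpha> \<beta> assume "\<alpha> \<in> S" "\<beta> \<in> S" "C \<alpha> \<beta> \<noteq> 0"
  then show "radd \<alpha> \<beta> \<in> S" using assms radd_pos_roots_if_C by blast
next
  fix \<alpha> \<beta> assume "\<alpha> \<in> S" "\<beta> \<in> S"
  then show "C \<alpha> \<beta> = - C \<beta> \<alpha>" using assms C_antisym_pos_roots by blast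
next
  fix a b y assume "a \<in> S" "b \<in> S" "y \<in> S"
  then show "C a b * C (radd a b) y = C a y * C (radd a y) b + C b y * C a (radd b y)"
    using assms C_jacobi_pos_roots by blast
qed

end

theorem lemmaA4:
  fixes sc :: "complex \<Rightarrow> 'g::ab_group_add \<Rightarrow> 'g"
    and br :: "'g \<Rightarrow> 'g \<Rightarrow> 'g"
    and H :: "'g set"
    and Bs S :: "('g \<Rightarrow> complex) set"
    and x :: "('g \<Rightarrow> complex) \<Rightarrow> 'g"
    and C :: "('g \<Rightarrow> complex) \<Rightarrow> ('g \<Rightarrow> complex) \<Rightarrow> complex"
  assumes ss: "semisimple_lie sc br"
    and cartan: "cartan_subalgebra sc br H"
    and base: "is_base sc br H Bs"
    and rootvec: "\<forall>\<alpha>\<in>roots sc br H. x \<alpha> \<in> root_space sc br H \<alpha> \<and> x \<alpha> \<noteq> 0"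
    and structconst: "\<forall>\<alpha>\<in>pos_roots sc br H Bs. \<forall>\<beta>\<in>pos_roots sc br H Bs.
           br (x \<alpha>) (x \<beta>) = sc (C \<alpha> \<beta>) (x (radd \<alpha> \<beta>))
           \<and> (radd \<alpha> \<beta> \<notin> roots sc br H \<longrightarrow> C \<alpha> \<beta> = 0)"
    and S_ne: "S \<noteq> {}"
    and S_pos: "S \<subseteq> pos_roots sc br H Bs"
    and S_closed: "\<forall>\<alpha>\<in>S. \<forall>\<beta>\<in>S. radd \<alpha> \<beta> \<in> pos_roots sc br H Bs \<longrightarrow> radd \<alpha> \<beta> \<in> S"
  shows "\<exists>\<phi>. \<phi> \<in> ring_iso (U_minus S C) (U_tilde_minus S C)
             \<and> (\<forall>c. \<phi> (J_minus S C +>\<^bsub>word_ring (T_minus_carrier S)\<^esub> constw c)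
                    = I_tilde S C +>\<^bsub>F_ring S\<^esub> constw c)"
proof -
  \<comment> \<open>Only the Lie algebra axioms enter.\<close>
  interpret root_vectors sc br H Bs x C
    using ss rootvec structconst by unfold_locales (simp_all add: semisimple_lie_def)
  interpret root_data S C
    using S_pos S_closed by (rule root_data)
  show ?thesis by (rule U_minus_iso)
qed

end
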